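(* Let $(X,\|\cdot\|_X)$ be a Banach space, $\mathcal{K}\subset X$ compact, and $\gamma_n=C'n^\delta\lambda^n$ with $\delta\in\mathbb{R}$, $C'>0$, $\lambda>2$. (i) For $\alpha>0$, $\beta\in\mathbb{R}$: if $\varepsilon_n(\mathcal{K})_X\asymp\frac{(\log_2n)^\beta}{n^\alpha}$ for $n\ge2$, then $d_n^{\gamma_n}(\mathcal{K})_X\asymp\frac{(\log_2n)^\beta}{n^{2\alpha}}$ for $n\ge2$. (ii) For $\alpha>0$: if $\varepsilon_n(\mathcal{K})_X\asymp\frac{1}{(\log_2n)^\alpha}$ for $n\ge2$, then $d_n^{\gamma_n}(\mathcal{K})_X\asymp\frac{1}{(\log_2n)^\alpha}$ for $n\ge2$.
   Context: $a_n\asymp b_n$ means there are constants $0<c\le C$ independent of $n$ with $cb_n\le a_n\le Cb_n$. For $m\ge0$, the entropy number $\varepsilon_m(\mathcal{K})_X$ is the infimum of all $\varepsilon>0$ such that $\mathcal{K}$ is covered by $2^m$ closed balls of radius $\varepsilon$ with centers in $X$. For $k\ge1$ and a norm $\|\cdot\|_{Y_k}$ on $\mathbb{R}^k$ let $B_{Y_k}=\{y\in\mathbb{R}^k:\|y\|_{Y_k}\le1\}$; for $\gamma\ge0$, $d^\gamma(\mathcal{K},Y_k)_X=\inf_{\Phi}\sup_{f\in\mathcal{K}}\inf_{y\in B_{Y_k}}\|f-\Phi(y)\|_X$, the infimum over all maps $\Phi:B_{Y_k}\to X$ with $\|\Phi(y)-\Phi(y')\|_X\le\gamma\|y-y'\|_{Y_k}$;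 and the Lipschitz width is $d_n^\gamma(\mathcal{K})_X=\inf_{1\le k\le n}\inf_{\|\cdot\|_{Y_k}}d^\gamma(\mathcal{K},Y_k)_X$, the inner infimum over all norms on $\mathbb{R}^k$. *)

theory Defs
  imports "HOL-Analysis.Analysis"
begin

definition asymp_equiv_ge2 :: "(nat \<Rightarrow> real) \<Rightarrow> (nat \<Rightarrow> real) \<Rightarrow> bool" where
  "asymp_equiv_ge2 a b \<longleftrightarrow>
     (\<exists>c C. 0 < c \<and> c \<le> C \<and> (\<forall>n\<ge>2. c * b n \<le> a n \<and> a n \<le> C * b n))"

definition entropy_number :: "'a::real_normed_vector set \<Rightarrow> nat \<Rightarrow> real" where
  "entropy_number K m = Inf {\<epsilon>. \<epsilon> > 0 \<and>
     (\<exists>C. finite C \<and> card C \<le> 2 ^ m \<and> K \<subseteq> (\<Union>c\<in>C. cball c \<epsilon>))}"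

text \<open>R^k is represented as functions nat \<Rightarrow> real vanishing from index k on.\<close>
definition Rk :: "nat \<Rightarrow> (nat \<Rightarrow> real) set" where
  "Rk k = {y. \<forall>i\<ge>k. y i = 0}"

definition is_norm_on_Rk :: "nat \<Rightarrow> ((nat \<Rightarrow> real) \<Rightarrow> real) \<Rightarrow> bool" where
  "is_norm_on_Rk k N \<longleftrightarrow>
     (\<forall>x\<in>Rk k. \<forall>y\<in>Rk k. N (\<lambda>i. x i + y i) \<le> N x + N y) \<and>
     (\<forall>x\<in>Rk k. \<forall>a. N (\<lambda>i. a * x i) = \<bar>a\<bar> * N x) \<and>
     (\<forall>x\<in>Rk k. N x = 0 \<longrightarrow> x = (\<lambda>i. 0))"

definition unit_ball_Rk :: "nat \<Rightarrow> ((nat \<Rightarrow> real) \<Rightarrow> real) \<Rightarrow> (nat \<Rightarrow> real) set" where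
  "unit_ball_Rk k N = {y \<in> Rk k. N y \<le> 1}"

definition lip_width_fixed ::
  "real \<Rightarrow> 'a::real_normed_vector set \<Rightarrow> nat \<Rightarrow> ((nat \<Rightarrow> real) \<Rightarrow> real) \<Rightarrow> real" where
  "lip_width_fixed \<gamma> K k N = Inf {(SUP f\<in>K. INF y\<in>unit_ball_Rk k N. norm (f - \<Phi> y)) | \<Phi>.
       \<forall>y\<in>unit_ball_Rk k N. \<forall>y'\<in>unit_ball_Rk k N.
          norm (\<Phi> y - \<Phi> y') \<le> \<gamma> * N (\<lambda>i. y i - y' i)}"

definition lip_width :: "real \<Rightarrow> 'a::real_normed_vector set \<Rightarrow> nat \<Rightarrow> real" where
  "lip_width \<gamma> K n = Inf {lip_width_fixed \<gamma> K k N | k N. 1 \<le> k \<and> k \<le> n \<and> is_norm_on_Rk k N}"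

end

theory Submission
  imports Defs "HOL-Real_Asymp.Real_Asymp"
begin

text \<open>Upper bound: the centres of an \<open>\<epsilon>\<close>-cover of \<open>K\<close> by \<open>2^(n^2)\<close> balls are attached to the
  \<open>2^(n^2)\<close> points of a grid of mesh \<open>2^(1-n)\<close> in the unit cube of R^n, and interpolated by a
  sum of bumps with disjoint supports. Its Lipschitz constant is about \<open>2^n diam K\<close>, which is
  eventually below \<open>\<gamma>_n = C' n^\<delta> \<lambda>^n\<close> because \<open>\<lambda> > 2\<close>; hence \<open>d_n \<le> \<epsilon>_(n^2)\<close>.

  Lower bound: for any norm on R^k, \<open>k \<le> n\<close>, the unit ball has an \<open>\<eta>\<close>-net of \<open>2^(k(3k+q))\<close>
  points when \<open>2^q \<ge> 1 + 2/\<eta>\<close>, and its image under a \<open>\<gamma>\<close>-Lipschitz map covers \<open>K\<close> up to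
  \<open>d + \<gamma>\<eta>\<close>. With \<open>\<gamma>\<eta>\<close> a small multiple of the expected rate, \<open>log \<gamma>_n = O(n)\<close> gives
  \<open>q = O(n)\<close>, so \<open>\<epsilon>_(C n^2)\<close> is at most a constant times \<open>d_n\<close>.

  Both rates change only by constant factors when \<open>n\<close> is replaced by \<open>n^2\<close> or \<open>C n^2\<close>.\<close>

section \<open>Norms on R^k\<close>

lemma Rk_zero [simp]: "(\<lambda>i. 0) \<in> Rk k"
  by (simp add: Rk_def)

lemma Rk_diff [intro]: "x \<in> Rk k \<Longrightarrow> y \<in> Rk k \<Longrightarrow> (\<lambda>i. x i - y i) \<in> Rk k"
  by (simp add: Rk_def)

lemma Rk_scale [intro]: "x \<in> Rk k \<Longrightarrow> (\<lambda>i. a * x i) \<in> Rk k"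
  by (simp add: Rk_def)

lemma Rk_mono: "k \<le> k' \<Longrightarrow> x \<in> Rk k \<Longrightarrow> x \<in> Rk k'"
  by (simp add: Rk_def)

lemma is_norm_on_Rk_mono: "is_norm_on_Rk k N \<Longrightarrow> k' \<le> k \<Longrightarrow> is_norm_on_Rk k' N"
  unfolding is_norm_on_Rk_def by (meson Rk_mono)

text \<open>For \<open>n = 0\<close> the maximum below is taken over the empty set, hence the hypotheses \<open>n \<ge> 1\<close>.\<close>

definition supnorm :: "nat \<Rightarrow> (nat \<Rightarrow> real) \<Rightarrow> real" where
  "supnorm n y = Max ((\<lambda>i. \<bar>y i\<bar>) ` {..<n})"

lemma abs_le_supnorm: "i < n \<Longrightarrow> \<bar>y i\<bar> \<le> supnorm n y"
  unfolding supnorm_def by (rule Max_ge) auto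

lemma supnorm_le: "n \<ge> 1 \<Longrightarrow> (\<And>i. i < n \<Longrightarrow> \<bar>y i\<bar> \<le> c) \<Longrightarrow> supnorm n y \<le> c"
  unfolding supnorm_def by (subst Max_le_iff) (auto simp: lessThan_empty_iff)

lemma supnorm_attained: "n \<ge> 1 \<Longrightarrow> \<exists>i<n. \<bar>y i\<bar> = supnorm n y"
proof -
  assume "n \<ge> 1"
  then have "supnorm n y \<in> (\<lambda>i. \<bar>y i\<bar>) ` {..<n}"
    unfolding supnorm_def by (intro Max_in) (auto simp: lessThan_empty_iff)
  then show ?thesis by auto
qed

lemma supnorm_nonneg: "n \<ge> 1 \<Longrightarrow> 0 \<le> supnorm n y"
  using abs_le_supnorm[of 0 n y] by simp

lemma supnorm_diff_triangle:
  "n \<ge> 1 \<Longrightarrow> supnorm n (\<lambda>i. x i - z i) \<le> supnorm n (\<lambda>i. x i - y i) + supnorm n (\<lambda>i. y i - z i)"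
proof (rule supnorm_le)
  fix i assume "i < n"
  then show "\<bar>x i - z i\<bar> \<le> supnorm n (\<lambda>i. x i - y i) + supnorm n (\<lambda>i. y i - z i)"
    using abs_le_supnorm[of i n "\<lambda>i. x i - y i"] abs_le_supnorm[of i n "\<lambda>i. y i - z i"] by simp
qed

lemma supnorm_diff_commute: "supnorm n (\<lambda>i. x i - y i) = supnorm n (\<lambda>i. y i - x i)"
  unfolding supnorm_def by (simp add: abs_minus_commute)

lemma supnorm_diff_self: "n \<ge> 1 \<Longrightarrow> supnorm n (\<lambda>i. x i - x i) = 0"
  using supnorm_le[of n "\<lambda>i. x i - x i" 0] supnorm_nonneg[of n "\<lambda>i. x i - x i"] by simp

lemma supnorm_scale: "n \<ge> 1 \<Longrightarrow> supnorm n (\<lambda>i. a * x i) = \<bar>a\<bar> * supnorm n x"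
proof -
  assume "n \<ge> 1"
  have "(\<lambda>i. \<bar>a * x i\<bar>) ` {..<n} = (\<lambda>t. \<bar>a\<bar> * t) ` ((\<lambda>i. \<bar>x i\<bar>) ` {..<n})"
    by (auto simp: abs_mult)
  then show ?thesis
    using \<open>n \<ge> 1\<close> unfolding supnorm_def
    by (simp add: mono_Max_commute[symmetric] mono_def mult_left_mono lessThan_empty_iff)
qed

lemma is_norm_on_Rk_supnorm:
  assumes n: "n \<ge> 1"
  shows "is_norm_on_Rk n (supnorm n)"
  unfolding is_norm_on_Rk_def
proof (intro conjI ballI allI impI)
  fix x y
  show "supnorm n (\<lambda>i. x i + y i) \<le> supnorm n x + supnorm n y"
    using abs_le_supnorm[of _ n x] abs_le_supnorm[of _ n y]
    by (intro supnorm_le[OF n]) (auto intro: abs_triangle_ineq[THEN order_trans] add_mono)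
next
  fix x assume x: "x \<in> Rk n" and "supnorm n x = 0"
  then have "x i = 0" for i
    using abs_le_supnorm[of i n x] by (cases "i < n") (auto simp: Rk_def)
  then show "x = (\<lambda>i. 0)"
    by blast
qed (rule supnorm_scale[OF n])

lemma compact_supnorm_sphere:
  assumes k: "k \<ge> 1"
  shows "compact {x \<in> Rk k. supnorm k x = 1}"
proof -
  define cube :: "(nat \<Rightarrow> real) set" where "cube = PiE UNIV (\<lambda>i. if i < k then {-1..1} else {0})"
  define faces :: "(nat \<Rightarrow> real) set" where "faces = (\<Union>i<k. {x. \<bar>x i\<bar> = 1})"
  have "compactin (product_topology (\<lambda>i. euclidean) UNIV) cube"
    unfolding cube_def compactin_PiE by simp
  then have "compact cube"
    by (simp add: euclidean_product_topology)
  moreover have "closed faces"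
    unfolding faces_def
    by (intro closed_UN finite_lessThan ballI closed_Collect_eq continuous_on_rabs
        continuous_on_product_coordinates continuous_on_const)
  moreover have "{x \<in> Rk k. supnorm k x = 1} = cube \<inter> faces"
  proof (intro equalityI subsetI)
    fix x assume "x \<in> {x \<in> Rk k. supnorm k x = 1}"
    then have x: "x \<in> Rk k" "supnorm k x = 1" by auto
    have "x i \<in> (if i < k then {-1..1} else {0})" for i
      using x abs_le_supnorm[of i k x] by (auto simp: Rk_def abs_le_iff)
    then have "x \<in> cube"
      by (simp add: cube_def PiE_iff)
    moreover have "x \<in> faces"
      using supnorm_attained[OF k, of x] x(2) by (auto simp: faces_def)
    ultimately show "x \<in> cube \<inter> faces" by blast
  next
    fix x assume "x \<in> cube \<inter> faces"
    then have cube: "\<And>i. x i \<in> (if i < k then {-1..1} else {0})" and "\<exists>i<k. \<bar>x i\<bar> = 1"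
      by (auto simp: cube_def faces_def PiE_iff)
    then have "supnorm k x \<ge> 1"
      using abs_le_supnorm[of _ k x] by force
    moreover have "supnorm k x \<le> 1"
      using cube by (intro supnorm_le[OF k]) (metis abs_le_iff atLeastAtMost_iff minus_le_iff)
    moreover have "x \<in> Rk k"
      using cube by (simp add: Rk_def) (metis empty_iff insert_iff not_le)
    ultimately show "x \<in> {x \<in> Rk k. supnorm k x = 1}" by simp
  qed
  ultimately show ?thesis
    by (simp add: compact_Int_closed)
qed

locale norm_Rk =
  fixes k :: nat and N :: "(nat \<Rightarrow> real) \<Rightarrow> real"
  assumes is_norm: "is_norm_on_Rk k N"
begin

lemma N_triangle: "x \<in> Rk k \<Longrightarrow> y \<in> Rk k \<Longrightarrow> N (\<lambda>i. x i + y i) \<le> N x + N y"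
  using is_norm by (simp add: is_norm_on_Rk_def)

lemma N_scale: "x \<in> Rk k \<Longrightarrow> N (\<lambda>i. a * x i) = \<bar>a\<bar> * N x"
  using is_norm by (simp add: is_norm_on_Rk_def)

lemma N_eq_0D: "x \<in> Rk k \<Longrightarrow> N x = 0 \<Longrightarrow> x = (\<lambda>i. 0)"
  using is_norm by (simp add: is_norm_on_Rk_def)

lemma N_zero [simp]: "N (\<lambda>i. 0) = 0"
  using N_scale[of "\<lambda>i. 0" 0] by simp

lemma N_minus: "x \<in> Rk k \<Longrightarrow> N (\<lambda>i. - x i) = N x"
  using N_scale[of x "-1"] by simp

lemma N_nonneg: "x \<in> Rk k \<Longrightarrow> 0 \<le> N x"
  using N_triangle[of x "\<lambda>i. - x i"] N_minus[of x] by (simp add: Rk_def)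

lemma N_pos: "x \<in> Rk k \<Longrightarrow> x \<noteq> (\<lambda>i. 0) \<Longrightarrow> 0 < N x"
  using N_nonneg N_eq_0D by force

lemma N_diff_commute: "x \<in> Rk k \<Longrightarrow> y \<in> Rk k \<Longrightarrow> N (\<lambda>i. x i - y i) = N (\<lambda>i. y i - x i)"
  using N_minus[OF Rk_diff, of x y] by simp

lemma N_diff_triangle:
  "x \<in> Rk k \<Longrightarrow> y \<in> Rk k \<Longrightarrow> z \<in> Rk k \<Longrightarrow>
     N (\<lambda>i. x i - z i) \<le> N (\<lambda>i. x i - y i) + N (\<lambda>i. y i - z i)"
  using N_triangle[OF Rk_diff Rk_diff, of x y y z] by simp

lemma N_reverse_triangle: "x \<in> Rk k \<Longrightarrow> y \<in> Rk k \<Longrightarrow> \<bar>N x - N y\<bar> \<le> N (\<lambda>i. x i - y i)"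
  using N_triangle[OF Rk_diff, of x y y] N_triangle[OF Rk_diff, of y x x] N_diff_commute[of x y]
  by (simp add: abs_le_iff)

lemma N_le_sum_coordinates:
  assumes x: "x \<in> Rk k"
  shows "N x \<le> (\<Sum>i<k. \<bar>x i\<bar> * N (\<lambda>j. if j = i then 1 else 0))"
proof -
  have partial: "N (\<lambda>j. if j < m then x j else 0) \<le> (\<Sum>i<m. \<bar>x i\<bar> * N (\<lambda>j. if j = i then 1 else 0))"
    if "m \<le> k" for m
    using that
  proof (induction m)
    case 0
    then show ?case by simp
  next
    case (Suc m)
    define e where "e = (\<lambda>j. if j = m then 1 else (0::real))"
    have e: "e \<in> Rk k"
      using Suc.prems by (auto simp: Rk_def e_def)
    have "(\<lambda>j. if j < Suc m then x j else 0) = (\<lambda>j. (if j < m then x j else 0) + x m * e j)"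
      by (auto simp: e_def less_Suc_eq)
    moreover have "(\<lambda>j. if j < m then x j else 0) \<in> Rk k"
      using Suc.prems by (auto simp: Rk_def)
    ultimately have "N (\<lambda>j. if j < Suc m then x j else 0)
        \<le> N (\<lambda>j. if j < m then x j else 0) + \<bar>x m\<bar> * N e"
      using N_triangle[OF _ Rk_scale[OF e]] N_scale[OF e] by simp
    then show ?case
      using Suc by (simp add: e_def)
  qed
  have "(\<lambda>j. if j < k then x j else 0) = x"
    using x by (auto simp: Rk_def)
  with partial[OF order_refl] show ?thesis
    by (simp only:)
qed

lemma continuous_on_N: "continuous_on (Rk k) N"
  unfolding continuous_on_def
proof
  fix x assume x: "x \<in> Rk k"
  define g where "g = (\<lambda>y. \<Sum>i<k. \<bar>y i - x i\<bar> * N (\<lambda>j. if j = i then 1 else 0))"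
  have "((\<lambda>y. y i) \<longlongrightarrow> x i) (at x within Rk k)" for i
  proof -
    have "continuous_on UNIV (\<lambda>y::nat \<Rightarrow> real. y i)"
      by (rule continuous_on_product_coordinates)
    then have "isCont (\<lambda>y::nat \<Rightarrow> real. y i) x"
      using continuous_on_eq_continuous_at[OF open_UNIV] by blast
    then show ?thesis
      unfolding isCont_def by (rule tendsto_within_subset) simp
  qed
  then have "(g \<longlongrightarrow> g x) (at x within Rk k)"
    unfolding g_def by (intro tendsto_sum tendsto_mult tendsto_const tendsto_rabs tendsto_diff)
  then have g: "(g \<longlongrightarrow> 0) (at x within Rk k)"
    by (simp add: g_def)
  have "\<forall>y\<in>Rk k. norm (N y - N x) \<le> g y"
    using N_reverse_triangle[OF _ x] N_le_sum_coordinates[OF Rk_diff[OF _ x]]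
    by (force simp: g_def)
  then have "eventually (\<lambda>y. norm (N y - N x) \<le> g y) (at x within Rk k)"
    unfolding eventually_at_filter by (auto intro: always_eventually)
  then have "((\<lambda>y. N y - N x) \<longlongrightarrow> 0) (at x within Rk k)"
    using g by (rule Lim_null_comparison)
  then show "(N \<longlongrightarrow> N x) (at x within Rk k)"
    using LIM_zero_cancel by blast
qed

text \<open>\<open>N\<close> attains a positive minimum on the compact unit sphere of the maximum norm.\<close>

lemma supnorm_le_N:
  assumes k: "k \<ge> 1"
  shows "\<exists>a>0. \<forall>x\<in>Rk k. a * supnorm k x \<le> N x"
proof -
  define S where "S = {x \<in> Rk k. supnorm k x = 1}"
  define e0 where "e0 = (\<lambda>j::nat. if j = 0 then 1 else (0::real))"
  have "supnorm k e0 \<le> 1"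
    by (rule supnorm_le[OF k]) (simp add: e0_def)
  moreover have "1 \<le> supnorm k e0"
    using abs_le_supnorm[of 0 k e0] k by (simp add: e0_def)
  moreover have "e0 \<in> Rk k"
    using k by (simp add: e0_def Rk_def)
  ultimately have "e0 \<in> S"
    by (simp add: S_def)
  then obtain x0 where x0: "x0 \<in> S" and x0_min: "\<And>y. y \<in> S \<Longrightarrow> N x0 \<le> N y"
    using continuous_attains_inf[OF compact_supnorm_sphere[OF k, folded S_def], of N]
      continuous_on_subset[OF continuous_on_N] by (auto simp: S_def)
  have a: "N x0 > 0"
    using x0 supnorm_le[OF k, of "\<lambda>i. 0" 0] by (intro N_pos) (auto simp: S_def)
  have "N x0 * supnorm k x \<le> N x" if x: "x \<in> Rk k" for x
  proof (cases "supnorm k x = 0")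
    case True
    then show ?thesis using N_nonneg[OF x] by simp
  next
    case False
    then have m: "supnorm k x > 0"
      using supnorm_nonneg[OF k] by (simp add: order_less_le)
    have "(\<lambda>i. (1 / supnorm k x) * x i) \<in> Rk k"
      using x by (rule Rk_scale)
    moreover have "supnorm k (\<lambda>i. (1 / supnorm k x) * x i) = 1"
      unfolding supnorm_scale[OF k] using m by simp
    ultimately have "(\<lambda>i. (1 / supnorm k x) * x i) \<in> S"
      by (simp add: S_def)
    then have "N x0 \<le> N (\<lambda>i. (1 / supnorm k x) * x i)"
      by (rule x0_min)
    also have "\<dots> = N x / supnorm k x"
      unfolding N_scale[OF x] using m by simp
    finally have "N x0 \<le> N x / supnorm k x" .
    then show ?thesis
      using m by (simp add: field_simps)
  qed
  then show ?thesis
    using a by blast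
qed

end

section \<open>Finite nets for the balls of a norm on R^k\<close>

text \<open>\<open>s\<close> is the norm of the last coordinate functional, and \<open>e\<close> almost attains it.\<close>

lemma last_coordinate_norming_vector:
  assumes "is_norm_on_Rk (Suc k) N"
  shows "\<exists>e s. e \<in> Rk (Suc k) \<and> N e \<le> 1 \<and> s > 0 \<and> s / 2 < e k \<and>
           (\<forall>x\<in>Rk (Suc k). \<bar>x k\<bar> \<le> s * N x)"
proof -
  interpret norm_Rk "Suc k" N
    by (rule norm_Rk.intro[OF assms])
  obtain a where a: "a > 0" "\<And>x. x \<in> Rk (Suc k) \<Longrightarrow> a * supnorm (Suc k) x \<le> N x"
    using supnorm_le_N by auto
  define B where "B = unit_ball_Rk (Suc k) N"
  define s where "s = Sup ((\<lambda>x. x k) ` B)"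
  have bdd: "bdd_above ((\<lambda>x. x k) ` B)"
  proof (rule bdd_aboveI2)
    fix x assume "x \<in> B"
    then have "a * \<bar>x k\<bar> \<le> 1"
      using a(2)[of x] abs_le_supnorm[of k "Suc k" x] a(1)
      by (auto simp: B_def unit_ball_Rk_def intro: order_trans[OF mult_left_mono])
    then show "x k \<le> 1 / a"
      using a(1) by (simp add: field_simps) (meson abs_ge_self mult_left_mono order_trans less_imp_le)
  qed
  have normalized: "(\<lambda>i. (c / N x) * x i) \<in> B" if x: "x \<in> Rk (Suc k)" "N x > 0" and c: "\<bar>c\<bar> = 1" for x c
    using N_scale[OF x(1), of "c / N x"] x c by (auto simp: B_def unit_ball_Rk_def Rk_def abs_divide)
  have le_s: "x k / N x \<le> s" if "x \<in> Rk (Suc k)" "N x > 0" for x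
    using cSup_upper[OF imageI[OF normalized[OF that, of 1]] bdd] by (simp add: s_def)
  define u where "u = (\<lambda>i. if i = k then 1 else (0::real))"
  have u: "u \<in> Rk (Suc k)" "N u > 0"
    by (auto simp: u_def Rk_def intro!: N_pos) (metis zero_neq_one)
  then have s_pos: "s > 0"
    using le_s[OF u] by (simp add: u_def) (meson less_le_trans zero_less_divide_1_iff)
  then obtain e where e: "e \<in> B" "s / 2 < e k"
    using less_cSup_iff[OF _ bdd, of "s / 2"] normalized[OF u, of 1] by (auto simp: s_def)
  have "\<bar>x k\<bar> \<le> s * N x" if x: "x \<in> Rk (Suc k)" for x
  proof (cases "N x = 0")
    case True
    then show ?thesis using N_eq_0D[OF x] by simp
  next
    case False
    then have Nx: "N x > 0" using N_nonneg[OF x] by simp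
    have "x k / N x \<le> s" "(\<lambda>i. - x i) k / N (\<lambda>i. - x i) \<le> s"
      using le_s[OF x Nx] le_s[of "\<lambda>i. - x i"] x Nx by (auto simp: N_minus Rk_def)
    then show ?thesis
      using Nx N_minus[OF x] by (simp add: field_simps abs_le_iff)
  qed
  then show ?thesis
    using e s_pos by (auto simp: B_def unit_ball_Rk_def)
qed

lemma interval_grid_cover:
  fixes R h \<tau> :: real
  assumes "R > 0" "h > 0" "\<bar>\<tau>\<bar> \<le> 2 * R"
  shows "\<exists>j\<le>nat \<lfloor>4 * R / h\<rfloor>. \<bar>\<tau> - (- 2 * R + real j * h)\<bar> \<le> h"
proof -
  define j where "j = nat \<lfloor>(\<tau> + 2 * R) / h\<rfloor>"
  have "0 \<le> (\<tau> + 2 * R) / h"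
    using assms by auto
  then have "real j \<le> (\<tau> + 2 * R) / h" "(\<tau> + 2 * R) / h < real j + 1"
    unfolding j_def by linarith+
  then have "real j * h \<le> \<tau> + 2 * R" "\<tau> + 2 * R < real j * h + h"
    using assms(2) by (simp_all add: field_simps)
  moreover have "j \<le> nat \<lfloor>4 * R / h\<rfloor>"
    unfolding j_def using assms by (intro nat_mono floor_mono divide_right_mono) auto
  ultimately show ?thesis
    by (intro exI[of _ j]) auto
qed

text \<open>No volume argument is available for an abstract norm, so nets are built one coordinate
  at a time: along the norming vector \<open>e\<close> of the last coordinate, \<open>x\<close> is matched up to \<open>\<eta>/2\<close>
  by a grid of step \<open>\<eta>/2\<close> in \<open>[-2R, 2R]\<close>, and the remainder lies in the \<open>3R\<close>-ball of R^(k-1).\<close>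

lemma net_extend_dimension:
  assumes N: "is_norm_on_Rk (Suc k) N"
    and e: "e \<in> Rk (Suc k)" "N e \<le> 1" "s > 0" "s / 2 < e k"
    and bound: "\<forall>x\<in>Rk (Suc k). \<bar>x k\<bar> \<le> s * N x"
    and R: "R > 0" and \<eta>: "\<eta> > 0"
    and F: "F \<subseteq> Rk k" "\<forall>z\<in>Rk k. N z \<le> 3 * R \<longrightarrow> (\<exists>z'\<in>F. N (\<lambda>i. z i - z' i) \<le> \<eta> / 2)"
    and x: "x \<in> Rk (Suc k)" "N x \<le> R"
  shows "\<exists>j\<le>nat \<lfloor>8 * R / \<eta>\<rfloor>. \<exists>z'\<in>F. N (\<lambda>i. x i - ((- 2 * R + real j * (\<eta> / 2)) * e i + z' i)) \<le> \<eta>"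
proof -
  interpret norm_Rk "Suc k" N
    by (rule norm_Rk.intro[OF N])
  have ek: "e k > 0"
    using e by simp
  define t where "t = x k / e k"
  have "\<bar>x k\<bar> \<le> s * R"
    using bound x e(3) by (meson mult_left_mono less_imp_le order_trans)
  also have "\<dots> < 2 * R * e k"
    using e(4) R by (simp add: mult.commute mult_strict_left_mono)
  finally have t: "\<bar>t\<bar> \<le> 2 * R"
    using ek by (simp add: t_def abs_divide divide_le_eq)
  define z where "z = (\<lambda>i. x i - t * e i)"
  have "z i = 0" if "k \<le> i" for i
    using that x(1) e(1) ek by (cases "i = k") (auto simp: z_def t_def Rk_def)
  then have z: "z \<in> Rk k"
    by (simp add: Rk_def)
  have "N z \<le> N x + \<bar>t\<bar> * N e"
    using N_triangle[OF x(1) Rk_scale[OF e(1), of "- t"]] N_scale[OF e(1), of "- t"] by (simp add: z_def)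
  also have "\<dots> \<le> R + 2 * R * 1"
    using x(2) t e(2) N_nonneg[OF e(1)] by (intro add_mono mult_mono) auto
  finally obtain z' where z': "z' \<in> F" "N (\<lambda>i. z i - z' i) \<le> \<eta> / 2"
    using F(2) z by auto
  obtain j where j: "j \<le> nat \<lfloor>4 * R / (\<eta> / 2)\<rfloor>" "\<bar>t - (- 2 * R + real j * (\<eta> / 2))\<bar> \<le> \<eta> / 2"
    using interval_grid_cover[OF R _ t, of "\<eta> / 2"] \<eta> by auto
  define \<tau> where "\<tau> = - 2 * R + real j * (\<eta> / 2)"
  have "(\<lambda>i. z i - z' i) \<in> Rk (Suc k)"
    using z z' F(1) Rk_mono[of k "Suc k"] by auto
  moreover have "(\<lambda>i. x i - (\<tau> * e i + z' i)) = (\<lambda>i. (t - \<tau>) * e i + (z i - z' i))"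
    by (auto simp: z_def algebra_simps)
  ultimately have "N (\<lambda>i. x i - (\<tau> * e i + z' i)) \<le> N (\<lambda>i. (t - \<tau>) * e i) + N (\<lambda>i. z i - z' i)"
    using N_triangle[OF Rk_scale[OF e(1), of "t - \<tau>"]] by simp
  also have "\<dots> = \<bar>t - \<tau>\<bar> * N e + N (\<lambda>i. z i - z' i)"
    by (simp add: N_scale[OF e(1)])
  also have "\<dots> \<le> \<eta> / 2 * 1 + \<eta> / 2"
    using j(2) e(2) z'(2) N_nonneg[OF e(1)] \<eta> unfolding \<tau>_def by (intro add_mono mult_mono) auto
  finally show ?thesis
    using j(1) z'(1) by (auto simp: \<tau>_def)
qed

lemma finite_net_norm_ball:
  assumes "is_norm_on_Rk k N" "R > 0" "\<eta> > 0" "1 + R / \<eta> \<le> 2 ^ q"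
  shows "\<exists>F. finite F \<and> F \<subseteq> Rk k \<and> card F \<le> 2 ^ (k * (3 * k + q)) \<and>
            (\<forall>x\<in>Rk k. N x \<le> R \<longrightarrow> (\<exists>z\<in>F. N (\<lambda>i. x i - z i) \<le> \<eta>))"
  using assms
proof (induction k arbitrary: N R \<eta> q)
  case 0
  then show ?case
    using norm_Rk.N_zero[OF norm_Rk.intro[OF "0.prems"(1)]]
    by (intro exI[of _ "{\<lambda>i. 0}"]) (auto simp: Rk_def)
next
  case (Suc k)
  obtain e s where e: "e \<in> Rk (Suc k)" "N e \<le> 1" "s > 0" "s / 2 < e k"
    and bound: "\<forall>x\<in>Rk (Suc k). \<bar>x k\<bar> \<le> s * N x"
    using last_coordinate_norming_vector[OF Suc.prems(1)] by blast
  have "1 + 3 * R / (\<eta> / 2) \<le> 8 * (1 + R / \<eta>)"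
    using Suc.prems by (simp add: field_simps)
  also have "\<dots> \<le> 2 ^ (q + 3)"
    using Suc.prems by (simp add: power_add)
  finally obtain Fk where Fk: "finite Fk" "Fk \<subseteq> Rk k" "card Fk \<le> 2 ^ (k * (3 * k + (q + 3)))"
    and Fk_net: "\<forall>z\<in>Rk k. N z \<le> 3 * R \<longrightarrow> (\<exists>z'\<in>Fk. N (\<lambda>i. z i - z' i) \<le> \<eta> / 2)"
    using Suc.IH[OF is_norm_on_Rk_mono[OF Suc.prems(1)], of "3 * R" "\<eta> / 2" "q + 3"] Suc.prems
    by auto
  define J where "J = nat \<lfloor>8 * R / \<eta>\<rfloor>"
  define F where "F = (\<lambda>(j, z) i. (- 2 * R + real j * (\<eta> / 2)) * e i + z i) ` ({..J} \<times> Fk)"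
  have "real J \<le> 8 * R / \<eta>"
    using Suc.prems by (simp add: J_def)
  then have "real (J + 1) \<le> 8 * (1 + R / \<eta>)"
    by simp
  also have "\<dots> \<le> 2 ^ (q + 3)"
    using Suc.prems by (simp add: power_add)
  finally have J: "J + 1 \<le> 2 ^ (q + 3)"
    by (metis of_nat_le_iff of_nat_numeral of_nat_power)
  have "card F \<le> (J + 1) * card Fk"
    unfolding F_def using card_image_le[of "{..J} \<times> Fk"] Fk(1) by (simp add: card_cartesian_product)
  also have "\<dots> \<le> 2 ^ (q + 3) * 2 ^ (k * (3 * k + (q + 3)))"
    using J Fk(3) by (rule mult_mono) auto
  also have "\<dots> \<le> 2 ^ (Suc k * (3 * Suc k + q))"
    by (subst power_add[symmetric], rule power_increasing) (auto simp: algebra_simps)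
  finally have "card F \<le> 2 ^ (Suc k * (3 * Suc k + q))" .
  moreover have "finite F" "F \<subseteq> Rk (Suc k)"
    unfolding F_def using Fk(1,2) e(1) by (auto simp: Rk_def)
  moreover have "\<exists>z\<in>F. N (\<lambda>i. x i - z i) \<le> \<eta>" if "x \<in> Rk (Suc k)" "N x \<le> R" for x
    using net_extend_dimension[OF Suc.prems(1) e bound Suc.prems(2,3) Fk(2) Fk_net that]
    unfolding F_def J_def by force
  ultimately show ?case
    by blast
qed

text \<open>Net points are moved into the unit ball, at the cost of doubling the radius.\<close>

lemma finite_net_in_unit_ball:
  assumes N: "is_norm_on_Rk k N" and \<eta>: "\<eta> > 0" and q: "1 + 2 / \<eta> \<le> 2 ^ q"
  shows "\<exists>F. finite F \<and> F \<subseteq> unit_ball_Rk k N \<and> card F \<le> 2 ^ (k * (3 * k + q)) \<and>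
            (\<forall>y\<in>unit_ball_Rk k N. \<exists>z\<in>F. N (\<lambda>i. y i - z i) \<le> \<eta>)"
proof -
  interpret norm_Rk k N
    by (rule norm_Rk.intro[OF N])
  define B where "B = unit_ball_Rk k N"
  obtain F where F: "finite F" "F \<subseteq> Rk k" "card F \<le> 2 ^ (k * (3 * k + q))"
    and net: "\<forall>y\<in>B. \<exists>z\<in>F. N (\<lambda>i. y i - z i) \<le> \<eta> / 2"
    using finite_net_norm_ball[OF N, of 1 "\<eta> / 2" q] \<eta> q by (auto simp: B_def unit_ball_Rk_def)
  define near where "near z = (SOME y. y \<in> B \<and> N (\<lambda>i. y i - z i) \<le> \<eta> / 2)" for z
  define F' where "F' = {z \<in> F. \<exists>y\<in>B. N (\<lambda>i. y i - z i) \<le> \<eta> / 2}"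
  have near: "near z \<in> B \<and> N (\<lambda>i. near z i - z i) \<le> \<eta> / 2" if z: "z \<in> F'" for z
  proof -
    obtain y where "y \<in> B \<and> N (\<lambda>i. y i - z i) \<le> \<eta> / 2"
      using z unfolding F'_def by blast
    then show ?thesis
      unfolding near_def by (rule someI[where P = "\<lambda>y. y \<in> B \<and> N (\<lambda>i. y i - z i) \<le> \<eta> / 2"])
  qed
  have "finite (near ` F')"
    using F(1) by (simp add: F'_def)
  moreover have "near ` F' \<subseteq> B"
    using near by blast
  moreover have "card (near ` F') \<le> card F'"
    by (rule card_image_le) (use F(1) in \<open>simp add: F'_def\<close>)
  then have "card (near ` F') \<le> 2 ^ (k * (3 * k + q))"
    using card_mono[OF F(1), of F'] F(3) by (simp add: F'_def)
  moreover have "\<forall>y\<in>B. \<exists>z\<in>near ` F'. N (\<lambda>i. y i - z i) \<le> \<eta>"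
  proof
    fix y assume y: "y \<in> B"
    obtain z where z: "z \<in> F" "N (\<lambda>i. y i - z i) \<le> \<eta> / 2"
      using net y by blast
    then have z': "z \<in> F'"
      using y by (auto simp: F'_def)
    have Rk: "y \<in> Rk k" "z \<in> Rk k" "near z \<in> Rk k"
      using y near[OF z'] z(1) F(2) by (auto simp: B_def unit_ball_Rk_def)
    have "N (\<lambda>i. y i - near z i) \<le> N (\<lambda>i. y i - z i) + N (\<lambda>i. near z i - z i)"
      using N_diff_triangle[OF Rk] N_diff_commute[OF Rk(3,2)] by simp
    then show "\<exists>z\<in>near ` F'. N (\<lambda>i. y i - z i) \<le> \<eta>"
      using z(2) near[OF z'] z' by (intro bexI[of _ "near z"]) auto
  qed
  ultimately show ?thesis
    unfolding B_def[symmetric] by (intro exI[of _ "near ` F'"]) simp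
qed

section \<open>Entropy numbers and Lipschitz widths\<close>

lemma entropy_number_le_cover:
  assumes "\<epsilon> > 0" "finite C" "card C \<le> 2 ^ m" "K \<subseteq> (\<Union>c\<in>C. cball c \<epsilon>)"
  shows "entropy_number K m \<le> \<epsilon>"
  unfolding entropy_number_def by (rule cInf_lower) (use assms in \<open>auto intro: bdd_belowI[of _ 0]\<close>)

lemma entropy_radii_nonempty:
  assumes "bounded (K :: 'a::real_normed_vector set)"
  shows "{\<epsilon>. \<epsilon> > 0 \<and> (\<exists>C. finite C \<and> card C \<le> 2 ^ m \<and> K \<subseteq> (\<Union>c\<in>C. cball c \<epsilon>))} \<noteq> {}"
proof -
  obtain r where "\<forall>f\<in>K. dist 0 f \<le> r"
    using assms bounded_any_center by blast
  then have "K \<subseteq> (\<Union>c\<in>{0}. cball c (max r 1))"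
    by auto
  then show ?thesis
    by (intro ex_in_conv[THEN iffD1] exI[of _ "max r 1"]) (auto intro!: exI[of _ "{0}"])
qed

lemma entropy_number_antimono:
  assumes "bounded K" "m \<le> m'"
  shows "entropy_number K m' \<le> entropy_number K m"
  unfolding entropy_number_def
proof (rule cInf_superset_mono[OF entropy_radii_nonempty[OF assms(1)]])
  show "bdd_below {\<epsilon>. 0 < \<epsilon> \<and> (\<exists>C. finite C \<and> card C \<le> 2 ^ m' \<and> K \<subseteq> (\<Union>c\<in>C. cball c \<epsilon>))}"
    by (rule bdd_belowI[of _ 0]) auto
  have "(2::nat) ^ m \<le> 2 ^ m'"
    using assms(2) by (simp add: power_increasing)
  then show "{\<epsilon>. 0 < \<epsilon> \<and> (\<exists>C. finite C \<and> card C \<le> 2 ^ m \<and> K \<subseteq> (\<Union>c\<in>C. cball c \<epsilon>))}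
      \<subseteq> {\<epsilon>. 0 < \<epsilon> \<and> (\<exists>C. finite C \<and> card C \<le> 2 ^ m' \<and> K \<subseteq> (\<Union>c\<in>C. cball c \<epsilon>))}"
    using order_trans by blast
qed

lemma entropy_number_less_imp_cover:
  assumes "bounded K" "entropy_number K m < t"
  shows "\<exists>\<epsilon> C. 0 < \<epsilon> \<and> \<epsilon> < t \<and> finite C \<and> card C \<le> 2 ^ m \<and> K \<subseteq> (\<Union>c\<in>C. cball c \<epsilon>)"
proof -
  have "bdd_below {\<epsilon>. \<epsilon> > 0 \<and> (\<exists>C. finite C \<and> card C \<le> 2 ^ m \<and> K \<subseteq> (\<Union>c\<in>C. cball c \<epsilon>))}"
    by (rule bdd_belowI[of _ 0]) auto
  then have "\<exists>\<epsilon>\<in>{\<epsilon>. \<epsilon> > 0 \<and> (\<exists>C. finite C \<and> card C \<le> 2 ^ m \<and> K \<subseteq> (\<Union>c\<in>C. cball c \<epsilon>))}. \<epsilon> < t"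
    using assms(2) cInf_less_iff[OF entropy_radii_nonempty[OF assms(1)]]
    unfolding entropy_number_def by simp
  then show ?thesis
    by auto
qed

lemma entropy_number_empty: "entropy_number ({} :: 'a::real_normed_vector set) m = 0"
proof -
  have "{\<epsilon>. \<epsilon> > 0 \<and> (\<exists>C. finite C \<and> card C \<le> 2 ^ m \<and> ({} :: 'a set) \<subseteq> (\<Union>c\<in>C. cball c \<epsilon>))} = {0<..}"
    by (auto intro: exI[of _ "{}"])
  then show ?thesis
    unfolding entropy_number_def by simp
qed

lemma nonempty_if_entropy_number_pos:
  fixes K :: "'a::real_normed_vector set"
  assumes "0 < entropy_number K m"
  shows "K \<noteq> {}"
proof
  assume "K = {}"
  then show False
    using assms entropy_number_empty[where 'a='a, of m] by simp
qed

definition lipschitz_maps ::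
  "real \<Rightarrow> nat \<Rightarrow> ((nat \<Rightarrow> real) \<Rightarrow> real) \<Rightarrow> ((nat \<Rightarrow> real) \<Rightarrow> 'a::real_normed_vector) set" where
  "lipschitz_maps \<gamma> k N = {\<Phi>. \<forall>y\<in>unit_ball_Rk k N. \<forall>y'\<in>unit_ball_Rk k N.
      norm (\<Phi> y - \<Phi> y') \<le> \<gamma> * N (\<lambda>i. y i - y' i)}"

definition approx_error ::
  "'a::real_normed_vector set \<Rightarrow> (nat \<Rightarrow> real) set \<Rightarrow> ((nat \<Rightarrow> real) \<Rightarrow> 'a) \<Rightarrow> real" where
  "approx_error K B \<Phi> = (SUP f\<in>K. INF y\<in>B. norm (f - \<Phi> y))"

lemma lip_width_fixed_eq:
  "lip_width_fixed \<gamma> K k N = Inf (approx_error K (unit_ball_Rk k N) ` lipschitz_maps \<gamma> k N)"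
  unfolding lip_width_fixed_def approx_error_def lipschitz_maps_def by (simp only: setcompr_eq_image)

lemma zero_in_unit_ball_Rk:
  assumes "is_norm_on_Rk k N"
  shows "(\<lambda>i. 0) \<in> unit_ball_Rk k N"
  using norm_Rk.N_zero[OF norm_Rk.intro[OF assms]] by (simp add: unit_ball_Rk_def)

lemma const_in_lipschitz_maps:
  assumes "\<gamma> \<ge> 0" "is_norm_on_Rk k N"
  shows "(\<lambda>_. c) \<in> lipschitz_maps \<gamma> k N"
  unfolding lipschitz_maps_def unit_ball_Rk_def
  using norm_Rk.N_nonneg[OF norm_Rk.intro[OF assms(2)] Rk_diff] assms(1) by auto

lemma lipschitz_maps_mono:
  assumes "\<gamma> \<le> \<gamma>'" "is_norm_on_Rk k N"
  shows "lipschitz_maps \<gamma> k N \<subseteq> lipschitz_maps \<gamma>' k N"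
proof
  fix \<Phi> assume \<Phi>: "\<Phi> \<in> lipschitz_maps \<gamma> k N"
  show "\<Phi> \<in> lipschitz_maps \<gamma>' k N"
    unfolding lipschitz_maps_def
  proof (intro CollectI ballI)
    fix y y' assume y: "y \<in> unit_ball_Rk k N" "y' \<in> unit_ball_Rk k N"
    then have "norm (\<Phi> y - \<Phi> y') \<le> \<gamma> * N (\<lambda>i. y i - y' i)"
      using \<Phi> by (simp add: lipschitz_maps_def)
    also have "\<dots> \<le> \<gamma>' * N (\<lambda>i. y i - y' i)"
      using y norm_Rk.N_nonneg[OF norm_Rk.intro[OF assms(2)] Rk_diff] assms(1)
      by (intro mult_right_mono) (auto simp: unit_ball_Rk_def)
    finally show "norm (\<Phi> y - \<Phi> y') \<le> \<gamma>' * N (\<lambda>i. y i - y' i)" .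
  qed
qed

lemma approx_error_le:
  assumes "K \<noteq> {}" "\<forall>f\<in>K. \<exists>y\<in>B. norm (f - \<Phi> y) \<le> \<epsilon>"
  shows "approx_error K B \<Phi> \<le> \<epsilon>"
  unfolding approx_error_def
proof (rule cSUP_least[OF assms(1)])
  fix f assume "f \<in> K"
  then obtain y where y: "y \<in> B" "norm (f - \<Phi> y) \<le> \<epsilon>"
    using assms(2) by blast
  have "(INF y\<in>B. norm (f - \<Phi> y)) \<le> norm (f - \<Phi> y)"
    by (rule cINF_lower[OF bdd_belowI2[of _ 0] y(1)]) simp
  then show "(INF y\<in>B. norm (f - \<Phi> y)) \<le> \<epsilon>"
    using y(2) by linarith
qed

lemma approx_error_bdd_above:
  assumes "bounded K" "y0 \<in> B"
  shows "bdd_above ((\<lambda>f. INF y\<in>B. norm (f - \<Phi> y)) ` K)"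
proof -
  obtain r where r: "\<forall>f\<in>K. norm (f - \<Phi> y0) \<le> r"
    using assms(1) bounded_any_center[of K "\<Phi> y0"] by (auto simp: dist_norm norm_minus_commute)
  show ?thesis
  proof (rule bdd_aboveI2)
    fix f assume "f \<in> K"
    then show "(INF y\<in>B. norm (f - \<Phi> y)) \<le> r"
      using cINF_lower[OF bdd_belowI2[of _ 0] assms(2), of "\<lambda>y. norm (f - \<Phi> y)"] r by force
  qed
qed

lemma approx_error_less:
  assumes "bounded K" "B \<noteq> {}" "approx_error K B \<Phi> < t" "f \<in> K"
  shows "\<exists>y\<in>B. norm (f - \<Phi> y) < t"
proof -
  obtain y0 where "y0 \<in> B"
    using assms(2) by blast
  have "(INF y\<in>B. norm (f - \<Phi> y)) < t"
    using cSUP_upper[OF assms(4) approx_error_bdd_above[OF assms(1) \<open>y0 \<in> B\<close>]] assms(3)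
    unfolding approx_error_def by (rule order_le_less_trans)
  moreover have "bdd_below ((\<lambda>y. norm (f - \<Phi> y)) ` B)"
    by (rule bdd_belowI2[of _ 0]) simp
  ultimately show ?thesis
    using cINF_less_iff[OF assms(2)] by blast
qed

lemma approx_error_nonneg:
  assumes "K \<noteq> {}" "bounded K" "B \<noteq> {}"
  shows "0 \<le> approx_error K B \<Phi>"
proof -
  obtain f y0 where "f \<in> K" "y0 \<in> B"
    using assms by blast
  then have "0 \<le> (INF y\<in>B. norm (f - \<Phi> y))"
    by (intro cINF_greatest) auto
  also have "\<dots> \<le> approx_error K B \<Phi>"
    unfolding approx_error_def using \<open>f \<in> K\<close>
    by (intro cSUP_upper approx_error_bdd_above[OF assms(2) \<open>y0 \<in> B\<close>])
  finally show ?thesis .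
qed

context
  fixes K :: "'a::real_normed_vector set"
  assumes K_bounded: "bounded K" and K_nonempty: "K \<noteq> {}"
begin

lemma approx_errors_bdd_below:
  assumes "is_norm_on_Rk k N"
  shows "bdd_below (approx_error K (unit_ball_Rk k N) ` lipschitz_maps \<gamma> k N)"
  using approx_error_nonneg[OF K_nonempty K_bounded] zero_in_unit_ball_Rk[OF assms]
  by (intro bdd_belowI[of _ 0]) blast

lemma lip_width_fixed_nonneg:
  assumes "\<gamma> \<ge> 0" "is_norm_on_Rk k N"
  shows "0 \<le> lip_width_fixed \<gamma> K k N"
  unfolding lip_width_fixed_eq
  using const_in_lipschitz_maps[OF assms] zero_in_unit_ball_Rk[OF assms(2)]
    approx_error_nonneg[OF K_nonempty K_bounded]
  by (intro cInf_greatest) blast+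

lemma lip_widths_bdd_below:
  "\<gamma> \<ge> 0 \<Longrightarrow> bdd_below {lip_width_fixed \<gamma> K k N | k N. 1 \<le> k \<and> k \<le> n \<and> is_norm_on_Rk k N}"
  using lip_width_fixed_nonneg by (intro bdd_belowI[of _ 0]) blast

lemma lip_width_le_fixed:
  assumes "\<gamma> \<ge> 0" "1 \<le> k" "k \<le> n" "is_norm_on_Rk k N"
  shows "lip_width \<gamma> K n \<le> lip_width_fixed \<gamma> K k N"
  unfolding lip_width_def using assms lip_widths_bdd_below by (intro cInf_lower) auto

lemma lip_width_le:
  assumes "\<gamma> \<ge> 0" "1 \<le> k" "k \<le> n" "is_norm_on_Rk k N" "\<Phi> \<in> lipschitz_maps \<gamma> k N"
    and "\<forall>f\<in>K. \<exists>y\<in>unit_ball_Rk k N. norm (f - \<Phi> y) \<le> \<epsilon>"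
  shows "lip_width \<gamma> K n \<le> \<epsilon>"
proof -
  have "lip_width_fixed \<gamma> K k N \<le> approx_error K (unit_ball_Rk k N) \<Phi>"
    unfolding lip_width_fixed_eq using assms(5) approx_errors_bdd_below[OF assms(4)]
    by (intro cInf_lower) auto
  also have "\<dots> \<le> \<epsilon>"
    by (rule approx_error_le[OF K_nonempty assms(6)])
  finally show ?thesis
    using lip_width_le_fixed[OF assms(1-4)] by linarith
qed

lemma lip_width_nonneg: "\<gamma> \<ge> 0 \<Longrightarrow> n \<ge> 1 \<Longrightarrow> 0 \<le> lip_width \<gamma> K n"
  unfolding lip_width_def
  using is_norm_on_Rk_supnorm[of 1] lip_width_fixed_nonneg by (intro cInf_greatest) auto

lemma lip_width_less_imp_approx:
  assumes "\<gamma> \<ge> 0" "n \<ge> 1" "lip_width \<gamma> K n < t"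
  shows "\<exists>k N \<Phi>. 1 \<le> k \<and> k \<le> n \<and> is_norm_on_Rk k N \<and> \<Phi> \<in> lipschitz_maps \<gamma> k N \<and>
           (\<forall>f\<in>K. \<exists>y\<in>unit_ball_Rk k N. norm (f - \<Phi> y) < t)"
proof -
  have "lip_width_fixed \<gamma> K 1 (supnorm 1) \<in> {lip_width_fixed \<gamma> K k N | k N. 1 \<le> k \<and> k \<le> n \<and> is_norm_on_Rk k N}"
    using is_norm_on_Rk_supnorm[of 1] assms(2) by auto
  then have "{lip_width_fixed \<gamma> K k N | k N. 1 \<le> k \<and> k \<le> n \<and> is_norm_on_Rk k N} \<noteq> {}"
    by blast
  then have "\<exists>v\<in>{lip_width_fixed \<gamma> K k N | k N. 1 \<le> k \<and> k \<le> n \<and> is_norm_on_Rk k N}. v < t"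
    using assms(3) cInf_less_iff[OF _ lip_widths_bdd_below[OF assms(1)]]
    unfolding lip_width_def by simp
  then obtain k N where kN: "1 \<le> k" "k \<le> n" "is_norm_on_Rk k N" "lip_width_fixed \<gamma> K k N < t"
    by blast
  have "approx_error K (unit_ball_Rk k N) ` lipschitz_maps \<gamma> k N \<noteq> {}"
    using const_in_lipschitz_maps[OF assms(1) kN(3)] by blast
  then have "\<exists>\<Phi>\<in>lipschitz_maps \<gamma> k N. approx_error K (unit_ball_Rk k N) \<Phi> < t"
    using kN(4) cInf_less_iff[OF _ approx_errors_bdd_below[OF kN(3)]]
    unfolding lip_width_fixed_eq by simp
  then obtain \<Phi> where \<Phi>: "\<Phi> \<in> lipschitz_maps \<gamma> k N" "approx_error K (unit_ball_Rk k N) \<Phi> < t"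
    by blast
  have "unit_ball_Rk k N \<noteq> {}"
    using zero_in_unit_ball_Rk[OF kN(3)] by blast
  then have "\<forall>f\<in>K. \<exists>y\<in>unit_ball_Rk k N. norm (f - \<Phi> y) < t"
    using approx_error_less[OF K_bounded _ \<Phi>(2)] by blast
  then show ?thesis
    using kN(1-3) \<Phi>(1) by (intro exI[of _ k] exI[of _ N] exI[of _ \<Phi>]) simp
qed

lemma lip_width_le_radius:
  assumes "\<gamma> \<ge> 0" "n \<ge> 1" "\<forall>f\<in>K. norm (f - x0) \<le> D"
  shows "lip_width \<gamma> K n \<le> D"
proof -
  have sn: "is_norm_on_Rk 1 (supnorm 1)"
    by (rule is_norm_on_Rk_supnorm) simp
  have "\<forall>f\<in>K. \<exists>y\<in>unit_ball_Rk 1 (supnorm 1). norm (f - x0) \<le> D"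
    using zero_in_unit_ball_Rk[OF sn] assms(3) by blast
  then show ?thesis
    by (rule lip_width_le[OF assms(1) order_refl assms(2) sn const_in_lipschitz_maps[OF assms(1) sn]])
qed

end

section \<open>Comparison of Lipschitz widths with entropy numbers\<close>

definition bump :: "nat \<Rightarrow> real \<Rightarrow> (nat \<Rightarrow> real) \<Rightarrow> (nat \<Rightarrow> real) \<Rightarrow> real" where
  "bump n M c y = max 0 (1 - M * supnorm n (\<lambda>i. y i - c i))"

lemma bump_center: "n \<ge> 1 \<Longrightarrow> bump n M c c = 1"
  using supnorm_diff_self[of n c] by (simp add: bump_def)

lemma bump_lipschitz:
  assumes n: "n \<ge> 1" and M: "M \<ge> 0"
  shows "\<bar>bump n M c y - bump n M c y'\<bar> \<le> M * supnorm n (\<lambda>i. y i - y' i)"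
proof -
  have "supnorm n (\<lambda>i. y i - c i) \<le> supnorm n (\<lambda>i. y i - y' i) + supnorm n (\<lambda>i. y' i - c i)"
    "supnorm n (\<lambda>i. y' i - c i) \<le> supnorm n (\<lambda>i. y' i - y i) + supnorm n (\<lambda>i. y i - c i)"
    using supnorm_diff_triangle[OF n] by blast+
  then have "\<bar>supnorm n (\<lambda>i. y i - c i) - supnorm n (\<lambda>i. y' i - c i)\<bar> \<le> supnorm n (\<lambda>i. y i - y' i)"
    using supnorm_diff_commute[of n y' y] by linarith
  then have "\<bar>M * supnorm n (\<lambda>i. y i - c i) - M * supnorm n (\<lambda>i. y' i - c i)\<bar> \<le> M * supnorm n (\<lambda>i. y i - y' i)"
    using M by (metis abs_mult abs_of_nonneg mult_left_mono right_diff_distrib)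
  then show ?thesis
    unfolding bump_def by linarith
qed

lemma bump_disjoint:
  assumes n: "n \<ge> 1" and sep: "2 \<le> M * supnorm n (\<lambda>i. c i - c' i)" and pos: "0 < bump n M c y"
  shows "bump n M c' y = 0"
proof (rule ccontr)
  assume "bump n M c' y \<noteq> 0"
  then have "M * supnorm n (\<lambda>i. y i - c' i) < 1" "M * supnorm n (\<lambda>i. y i - c i) < 1"
    using pos by (auto simp: bump_def max_def split: if_splits)
  moreover have "M \<ge> 0"
    using sep supnorm_nonneg[OF n, of "\<lambda>i. c i - c' i"] by (smt (verit) mult_nonpos_nonneg)
  then have "M * supnorm n (\<lambda>i. c i - c' i)
      \<le> M * supnorm n (\<lambda>i. y i - c i) + M * supnorm n (\<lambda>i. y i - c' i)"
    using supnorm_diff_triangle[OF n, of c c' y] supnorm_diff_commute[of n c y]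
    by (simp add: distrib_left[symmetric] mult_left_mono)
  ultimately show False
    using sep by linarith
qed

lemma bump_sum_at_center:
  fixes w :: "'b \<Rightarrow> 'a::real_vector"
  assumes n: "n \<ge> 1" and G: "finite G" "g \<in> G"
    and sep: "\<forall>g'\<in>G. g' \<noteq> g \<longrightarrow> 2 \<le> M * supnorm n (\<lambda>i. c g i - c g' i)"
  shows "(\<Sum>g'\<in>G. bump n M (c g') (c g) *\<^sub>R w g') = w g"
proof -
  have "bump n M (c g') (c g) *\<^sub>R w g' = (if g' = g then w g else 0)" if "g' \<in> G" for g'
    using bump_disjoint[OF n, of M "c g" "c g'" "c g"] sep that bump_center[OF n] by auto
  then show ?thesis
    using G by (simp add: sum.delta cong: sum.cong)
qed

text \<open>At most one bump is non-zero at each point, so at most two terms contribute to the difference.\<close>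

lemma bump_sum_lipschitz:
  fixes w :: "'b \<Rightarrow> 'a::real_normed_vector"
  assumes n: "n \<ge> 1" and M: "M \<ge> 0" and G: "finite G"
    and sep: "\<forall>g\<in>G. \<forall>g'\<in>G. g \<noteq> g' \<longrightarrow> 2 \<le> M * supnorm n (\<lambda>i. c g i - c g' i)"
    and w: "\<forall>g\<in>G. norm (w g) \<le> R" and R: "R \<ge> 0"
  shows "norm ((\<Sum>g\<in>G. bump n M (c g) y *\<^sub>R w g) - (\<Sum>g\<in>G. bump n M (c g) y' *\<^sub>R w g))
           \<le> 2 * M * R * supnorm n (\<lambda>i. y i - y' i)"
proof -
  define supp where "supp y = {g \<in> G. 0 < bump n M (c g) y}" for y
  have card_supp: "card (supp y) \<le> 1" for y
  proof -
    have "g = g'" if "g \<in> supp y" "g' \<in> supp y" for g g'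
      using that bump_disjoint[OF n, of M "c g" "c g'" y] sep by (force simp: supp_def)
    then show ?thesis
      using card_le_Suc0_iff_eq[of "supp y"] G by (simp add: supp_def)
  qed
  define T where "T = supp y \<union> supp y'"
  have T: "finite T" "T \<subseteq> G" "card T \<le> 2"
    using G card_Un_le[of "supp y" "supp y'"] card_supp[of y] card_supp[of y']
    by (auto simp: T_def supp_def)
  have zero: "bump n M (c g) y = 0 \<and> bump n M (c g) y' = 0" if "g \<in> G - T" for g
    using that by (auto simp: T_def supp_def bump_def)
  have "(\<Sum>g\<in>G. bump n M (c g) y *\<^sub>R w g) - (\<Sum>g\<in>G. bump n M (c g) y' *\<^sub>R w g)
      = (\<Sum>g\<in>T. (bump n M (c g) y - bump n M (c g) y') *\<^sub>R w g)"
    using zero by (simp add: sum_subtractf[symmetric] scaleR_diff_left sum.mono_neutral_right[OF G T(2)])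
  also have "norm \<dots> \<le> (\<Sum>g\<in>T. M * supnorm n (\<lambda>i. y i - y' i) * R)"
    using T(2) w bump_lipschitz[OF n M]
    by (intro norm_sum[THEN order_trans] sum_mono) (auto intro!: mult_mono simp: M supnorm_nonneg[OF n])
  also have "\<dots> \<le> 2 * (M * supnorm n (\<lambda>i. y i - y' i) * R)"
    using T(3) M R supnorm_nonneg[OF n] by (simp add: mult_right_mono)
  finally show ?thesis
    by (simp add: ac_simps)
qed

text \<open>Grid points are the centres of the \<open>M^n\<close> cubes of side \<open>2/M\<close> that tile \<open>[-1,1]^n\<close>.\<close>

definition grid :: "nat \<Rightarrow> nat \<Rightarrow> (nat \<Rightarrow> nat) set" where
  "grid n M = {g. (\<forall>i<n. g i < M) \<and> (\<forall>i\<ge>n. g i = 0)}"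

definition grid_point :: "nat \<Rightarrow> nat \<Rightarrow> (nat \<Rightarrow> nat) \<Rightarrow> nat \<Rightarrow> real" where
  "grid_point n M g i = (if i < n then (2 * real (g i) + 1) / real M - 1 else 0)"

lemma finite_card_grid: "finite (grid n M) \<and> card (grid n M) = M ^ n"
proof -
  have "bij_betw (\<lambda>g. restrict g {..<n}) (grid n M) (PiE {..<n} (\<lambda>_. {..<M}))"
  proof (rule bij_betw_byWitness[where f' = "\<lambda>h i. if i < n then h i else 0"])
    show "\<forall>g\<in>grid n M. (\<lambda>i. if i < n then restrict g {..<n} i else 0) = g"
      by (auto simp: grid_def fun_eq_iff)
    show "\<forall>h\<in>PiE {..<n} (\<lambda>_. {..<M}). restrict (\<lambda>i. if i < n then h i else 0) {..<n} = h"
    proof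
      fix h assume h: "h \<in> PiE {..<n} (\<lambda>_. {..<M})"
      have "restrict (\<lambda>i. if i < n then h i else 0) {..<n} = restrict h {..<n}"
        by (auto simp: restrict_def)
      then show "restrict (\<lambda>i. if i < n then h i else 0) {..<n} = h"
        using PiE_restrict[OF h] by simp
    qed
    show "(\<lambda>g. restrict g {..<n}) ` grid n M \<subseteq> PiE {..<n} (\<lambda>_. {..<M})"
    proof (rule image_subsetI)
      fix g assume "g \<in> grid n M"
      then show "restrict g {..<n} \<in> PiE {..<n} (\<lambda>_. {..<M})"
        by (simp add: restrict_PiE_iff grid_def)
    qed
    show "(\<lambda>h i. if i < n then h i else 0) ` PiE {..<n} (\<lambda>_. {..<M}) \<subseteq> grid n M"
    proof (rule image_subsetI)
      fix h assume "h \<in> PiE {..<n} (\<lambda>_. {..<M})"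
      then show "(\<lambda>i. if i < n then h i else 0) \<in> grid n M"
        by (simp add: grid_def PiE_iff)
    qed
  qed
  then show ?thesis
    by (simp add: bij_betw_finite bij_betw_same_card card_PiE finite_PiE)
qed

lemma grid_point_in_unit_ball:
  assumes n: "n \<ge> 1" and g: "g \<in> grid n M"
  shows "grid_point n M g \<in> unit_ball_Rk n (supnorm n)"
proof -
  have "\<bar>grid_point n M g i\<bar> \<le> 1" if "i < n" for i
  proof -
    have "Suc (g i) \<le> M"
      using g that by (simp add: grid_def Suc_le_eq)
    then have "real (g i) + 1 \<le> real M"
      by linarith
    then show ?thesis
      using that by (simp add: grid_point_def abs_le_iff field_simps)
  qed
  then show ?thesis
    using supnorm_le[OF n] by (simp add: unit_ball_Rk_def Rk_def grid_point_def)
qed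

lemma grid_points_separated:
  assumes g: "g \<in> grid n M" "g' \<in> grid n M" "g \<noteq> g'"
  shows "2 \<le> real M * supnorm n (\<lambda>i. grid_point n M g i - grid_point n M g' i)"
proof -
  obtain i where i: "g i \<noteq> g' i"
    using g(3) by blast
  then have "i < n"
    using g(1,2) unfolding grid_def by (metis (mono_tags, lifting) mem_Collect_eq not_le)
  have "g i < M"
    using g(1) \<open>i < n\<close> by (simp add: grid_def)
  then have M: "real M > 0"
    by linarith
  have "grid_point n M g i - grid_point n M g' i = 2 * (real (g i) - real (g' i)) / real M"
    using \<open>i < n\<close> M by (simp add: grid_point_def field_simps)
  moreover have "1 \<le> \<bar>real (g i) - real (g' i)\<bar>"
    using i by linarith
  ultimately have "2 \<le> real M * \<bar>grid_point n M g i - grid_point n M g' i\<bar>"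
    using M by (simp add: abs_mult)
  also have "\<dots> \<le> real M * supnorm n (\<lambda>i. grid_point n M g i - grid_point n M g' i)"
    using abs_le_supnorm[OF \<open>i < n\<close>, of "\<lambda>i. grid_point n M g i - grid_point n M g' i"] M
    by (simp add: mult_left_mono)
  finally show ?thesis .
qed

lemma lipschitz_map_onto_finite_set:
  fixes P :: "'a::real_normed_vector set" and M :: nat
  assumes n: "n \<ge> 1" and P: "finite P" "card P \<le> M ^ n"
    and R: "R \<ge> 0" "\<forall>p\<in>P. norm (p - x0) \<le> R"
  shows "\<exists>\<Phi>\<in>lipschitz_maps (2 * real M * R) n (supnorm n). P \<subseteq> \<Phi> ` unit_ball_Rk n (supnorm n)"
proof -
  define G where "G = grid n M"
  have G: "finite G" "card G = M ^ n"
    using finite_card_grid by (auto simp: G_def)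
  obtain h where h: "h ` P \<subseteq> G" "inj_on h P"
    using card_le_inj[OF P(1) G(1)] P(2) G(2) by auto
  define w where "w g = (if g \<in> h ` P then the_inv_into P h g - x0 else 0)" for g
  define \<Phi> where "\<Phi> y = x0 + (\<Sum>g\<in>G. bump n (real M) (grid_point n M g) y *\<^sub>R w g)" for y
  have sep: "\<forall>g\<in>G. \<forall>g'\<in>G. g \<noteq> g' \<longrightarrow> 2 \<le> real M * supnorm n (\<lambda>i. grid_point n M g i - grid_point n M g' i)"
    using grid_points_separated by (auto simp: G_def)
  have "\<forall>g\<in>G. norm (w g) \<le> R"
    using R the_inv_into_into[OF h(2)] by (auto simp: w_def)
  then have "\<Phi> \<in> lipschitz_maps (2 * real M * R) n (supnorm n)"
    using bump_sum_lipschitz[OF n _ G(1) sep _ R(1)]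
    by (auto simp: lipschitz_maps_def \<Phi>_def)
  moreover have "p \<in> \<Phi> ` unit_ball_Rk n (supnorm n)" if p: "p \<in> P" for p
  proof -
    have "h p \<in> G"
      using h(1) p by blast
    then have "\<Phi> (grid_point n M (h p)) = p"
      using bump_sum_at_center[OF n G(1), of "h p" "real M" "grid_point n M" w] sep
        the_inv_into_f_f[OF h(2) p] p by (auto simp: \<Phi>_def w_def)
    then show ?thesis
      using grid_point_in_unit_ball[OF n] \<open>h p \<in> G\<close> by (metis G_def image_eqI)
  qed
  ultimately show ?thesis
    by blast
qed

context
  fixes K :: "'a::real_normed_vector set"
  assumes K_bounded: "bounded K" and K_nonempty: "K \<noteq> {}"
begin

lemma lip_width_le_entropy_number_sq:
  assumes n: "n \<ge> 1" and D: "D > 0" "\<forall>f\<in>K. norm (f - x0) \<le> D"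
    and \<gamma>: "2 * 2 ^ n * (2 * D + 1) \<le> \<gamma>"
  shows "lip_width \<gamma> K n \<le> entropy_number K (n * n)"
proof (rule field_le_epsilon)
  fix e :: real assume e: "e > 0"
  have "entropy_number K (n * n) \<le> D"
    using D by (intro entropy_number_le_cover[of D "{x0}"]) (auto simp: dist_norm norm_minus_commute)
  then obtain \<epsilon> C where \<epsilon>: "0 < \<epsilon>" "\<epsilon> < entropy_number K (n * n) + e" "\<epsilon> < D + 1"
    and C: "finite C" "card C \<le> 2 ^ (n * n)" "K \<subseteq> (\<Union>c\<in>C. cball c \<epsilon>)"
    using entropy_number_less_imp_cover[OF K_bounded, of "n * n" "min (entropy_number K (n * n) + e) (D + 1)"] e
    by auto
  define P where "P = {c \<in> C. \<exists>f\<in>K. dist c f \<le> \<epsilon>}"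
  have "card P \<le> (2 ^ n) ^ n"
    using card_mono[OF C(1), of P] C(2) by (simp add: P_def power_mult)
  moreover have "\<forall>p\<in>P. norm (p - x0) \<le> 2 * D + 1"
  proof
    fix p assume "p \<in> P"
    then obtain f where f: "f \<in> K" "norm (p - f) \<le> \<epsilon>"
      by (auto simp: P_def dist_norm)
    have "norm (p - x0) \<le> norm (p - f) + norm (f - x0)"
      by (rule norm_diff_triangle_le[of _ f]) simp_all
    then show "norm (p - x0) \<le> 2 * D + 1"
      using f D(2) \<epsilon>(3) by fastforce
  qed
  ultimately obtain \<Phi> where \<Phi>: "\<Phi> \<in> lipschitz_maps (2 * real (2 ^ n) * (2 * D + 1)) n (supnorm n)"
    and onto: "P \<subseteq> \<Phi> ` unit_ball_Rk n (supnorm n)"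
    using lipschitz_map_onto_finite_set[OF n _ _ _, of P "2 ^ n" "2 * D + 1" x0] C(1) D(1)
    by (auto simp: P_def)
  have \<gamma>_nonneg: "\<gamma> \<ge> 0"
    using \<gamma> D(1) by (smt (verit) zero_le_mult_iff zero_le_power)
  have "\<Phi> \<in> lipschitz_maps \<gamma> n (supnorm n)"
    using \<Phi> lipschitz_maps_mono[OF _ is_norm_on_Rk_supnorm[OF n]] \<gamma> by auto
  moreover have "\<forall>f\<in>K. \<exists>y\<in>unit_ball_Rk n (supnorm n). norm (f - \<Phi> y) \<le> \<epsilon>"
  proof
    fix f assume f: "f \<in> K"
    then obtain c where "c \<in> C" "dist c f \<le> \<epsilon>"
      using C(3) by auto
    then have "c \<in> P" "norm (f - c) \<le> \<epsilon>"
      using f by (auto simp: P_def dist_norm norm_minus_commute)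
    then show "\<exists>y\<in>unit_ball_Rk n (supnorm n). norm (f - \<Phi> y) \<le> \<epsilon>"
      using onto by auto
  qed
  ultimately have "lip_width \<gamma> K n \<le> \<epsilon>"
    by (rule lip_width_le[OF K_bounded K_nonempty \<gamma>_nonneg n order_refl is_norm_on_Rk_supnorm[OF n]])
  then show "lip_width \<gamma> K n \<le> entropy_number K (n * n) + e"
    using \<epsilon>(2) by linarith
qed

lemma entropy_number_le_lip_width:
  assumes \<gamma>: "\<gamma> > 0" and n: "n \<ge> 1" and \<eta>: "\<eta> > 0" and q: "1 + 2 / \<eta> \<le> 2 ^ q"
  shows "entropy_number K (n * (3 * n + q)) \<le> lip_width \<gamma> K n + \<gamma> * \<eta>"
proof (rule field_le_epsilon)
  fix e :: real assume e: "e > 0"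
  define t where "t = lip_width \<gamma> K n + e"
  have t: "t > 0" "lip_width \<gamma> K n < t"
    using lip_width_nonneg[OF K_bounded K_nonempty _ n, of \<gamma>] \<gamma> e by (auto simp: t_def)
  then obtain k N \<Phi> where kN: "1 \<le> k" "k \<le> n" "is_norm_on_Rk k N" and \<Phi>: "\<Phi> \<in> lipschitz_maps \<gamma> k N"
    and approx: "\<forall>f\<in>K. \<exists>y\<in>unit_ball_Rk k N. norm (f - \<Phi> y) < t"
    using lip_width_less_imp_approx[OF K_bounded K_nonempty _ n] \<gamma> by (meson less_imp_le)
  obtain F where F: "finite F" "F \<subseteq> unit_ball_Rk k N" "card F \<le> 2 ^ (k * (3 * k + q))"
    and net: "\<forall>y\<in>unit_ball_Rk k N. \<exists>z\<in>F. N (\<lambda>i. y i - z i) \<le> \<eta>"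
    using finite_net_in_unit_ball[OF kN(3) \<eta> q] by blast
  have "k * (3 * k + q) \<le> n * (3 * n + q)"
    using kN(2) by (intro mult_mono add_mono) auto
  then have "(2::nat) ^ (k * (3 * k + q)) \<le> 2 ^ (n * (3 * n + q))"
    by (rule power_increasing) simp
  then have card: "card (\<Phi> ` F) \<le> 2 ^ (n * (3 * n + q))"
    using card_image_le[OF F(1), of \<Phi>] F(3) by linarith
  have cover: "K \<subseteq> (\<Union>c\<in>\<Phi> ` F. cball c (t + \<gamma> * \<eta>))"
  proof
    fix f assume "f \<in> K"
    then obtain y where y: "y \<in> unit_ball_Rk k N" "norm (f - \<Phi> y) < t"
      using approx by blast
    then obtain z where z: "z \<in> F" "N (\<lambda>i. y i - z i) \<le> \<eta>"
      using net by blast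
    have "norm (\<Phi> y - \<Phi> z) \<le> \<gamma> * N (\<lambda>i. y i - z i)"
      using \<Phi> y(1) z(1) F(2) by (auto simp: lipschitz_maps_def)
    also have "\<dots> \<le> \<gamma> * \<eta>"
      using z(2) \<gamma> by simp
    finally have "dist (\<Phi> z) f \<le> t + \<gamma> * \<eta>"
      using y(2) norm_triangle_ineq[of "f - \<Phi> y" "\<Phi> y - \<Phi> z"] by (simp add: dist_norm norm_minus_commute)
    then show "f \<in> (\<Union>c\<in>\<Phi> ` F. cball c (t + \<gamma> * \<eta>))"
      using z(1) by auto
  qed
  have "0 < t + \<gamma> * \<eta>"
    using t(1) \<gamma> \<eta> by (simp add: add_pos_pos)
  then have "entropy_number K (n * (3 * n + q)) \<le> t + \<gamma> * \<eta>"
    using finite_imageI[OF F(1)] card cover by (rule entropy_number_le_cover)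
  then show "entropy_number K (n * (3 * n + q)) \<le> lip_width \<gamma> K n + \<gamma> * \<eta> + e"
    by (simp add: t_def)
qed

end

section \<open>Asymptotics\<close>

lemma log2_le_self: "n \<ge> 1 \<Longrightarrow> log 2 (real n) \<le> real n"
  using log2_of_power_less[OF less_exp, of n] by simp

lemma log2_one_plus_mult_le:
  assumes "x \<ge> 0" "y \<ge> 0"
  shows "log 2 (1 + x * y) \<le> log 2 (1 + x) + log 2 (1 + y)"
proof -
  have "log 2 (1 + x * y) \<le> log 2 ((1 + x) * (1 + y))"
    using assms by (intro log_mono) (auto simp: algebra_simps intro: add_pos_nonneg)
  also have "\<dots> = log 2 (1 + x) + log 2 (1 + y)"
    using assms by (simp add: log_mult)
  finally show ?thesis .
qed

lemma log2_one_plus_le_linear: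
  assumes a: "a \<ge> 0" and n: "n \<ge> 1" and x: "0 \<le> x" "x \<le> real n powr a"
  shows "log 2 (1 + x) \<le> 1 + a * real n"
proof -
  have "1 \<le> real n powr a"
    using n a by (simp add: ge_one_powr_ge_zero)
  then have "1 + x \<le> 2 * real n powr a"
    using x by simp
  then have "log 2 (1 + x) \<le> log 2 (2 * real n powr a)"
    using x by (intro log_mono) auto
  also have "\<dots> = 1 + a * log 2 (real n)"
    using n by (simp add: log_mult log_powr)
  also have "\<dots> \<le> 1 + a * real n"
    using log2_le_self[OF n] a by (simp add: mult_left_mono)
  finally show ?thesis .
qed

lemma log2_one_plus_gamma_le:
  assumes C: "C' \<ge> 0" and lam: "lam \<ge> 1" and n: "n \<ge> 1"
  shows "log 2 (1 + C' * real n powr \<delta> * lam ^ n) \<le> (log 2 (1 + C') + 2 + \<bar>\<delta>\<bar> + log 2 lam) * real n"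
proof -
  have "log 2 (1 + C' * real n powr \<delta> * lam ^ n) \<le> log 2 (1 + C' * real n powr \<delta>) + log 2 (1 + lam ^ n)"
    using C lam by (intro log2_one_plus_mult_le) auto
  also have "log 2 (1 + C' * real n powr \<delta>) \<le> log 2 (1 + C') + log 2 (1 + real n powr \<delta>)"
    using C by (intro log2_one_plus_mult_le) auto
  also have "log 2 (1 + real n powr \<delta>) \<le> 1 + \<bar>\<delta>\<bar> * real n"
    using n by (intro log2_one_plus_le_linear) (auto intro: powr_mono)
  also have "log 2 (1 + lam ^ n) \<le> log 2 (2 * lam ^ n)"
    using lam by (intro log_mono) (auto intro: add_pos_nonneg one_le_power)
  also have "\<dots> = 1 + log 2 lam * real n"
    using lam by (simp add: log_mult log_nat_power)
  finally have "log 2 (1 + C' * real n powr \<delta> * lam ^ n) \<le> (log 2 (1 + C') + 2) + (\<bar>\<delta>\<bar> + log 2 lam) * real n"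
    by (simp add: algebra_simps)
  also have "\<dots> \<le> (log 2 (1 + C') + 2) * real n + (\<bar>\<delta>\<bar> + log 2 lam) * real n"
  proof (intro add_right_mono)
    have "0 \<le> log 2 (1 + C') + 2"
      using C by simp
    then show "log 2 (1 + C') + 2 \<le> (log 2 (1 + C') + 2) * real n"
      using n by (simp add: mult_le_cancel_left1)
  qed
  finally show ?thesis
    by (simp add: algebra_simps)
qed

lemma eventually_pow2_le_gamma:
  assumes C: "C' > 0" and lam: "lam > 2"
  shows "eventually (\<lambda>n. 2 ^ n * Z \<le> C' * real n powr \<delta> * lam ^ n) sequentially"
proof -
  define l where "l = ln (lam / 2)"
  have "l > 0"
    using lam by (simp add: l_def)
  then have "filterlim (\<lambda>n::nat. C' * real n powr \<delta> * exp (l * real n)) at_top at_top"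
    using C by real_asymp
  then have "eventually (\<lambda>n. Z \<le> C' * real n powr \<delta> * exp (l * real n)) sequentially"
    by (simp add: filterlim_at_top)
  moreover have eq: "C' * real n powr \<delta> * lam ^ n = 2 ^ n * (C' * real n powr \<delta> * exp (l * real n))" for n
  proof -
    have "exp (l * real n) = exp l ^ n"
      by (simp add: exp_of_nat_mult[symmetric] mult.commute)
    also have "exp l = lam / 2"
      using lam by (simp add: l_def)
    finally have "exp (l * real n) = (lam / 2) ^ n" .
    then show ?thesis
      by (simp add: power_divide)
  qed
  ultimately show ?thesis
    by (elim eventually_mono) (simp only: eq mult_left_mono zero_le_power zero_le_numeral)
qed

lemma exists_pow2_bound:
  assumes "x \<ge> 1"
  shows "\<exists>q. x \<le> 2 ^ q \<and> real q \<le> log 2 x + 1"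
proof -
  define q where "q = nat \<lceil>log 2 x\<rceil>"
  have "0 \<le> log 2 x"
    using assms by simp
  then have "log 2 x \<le> real q" "real q \<le> log 2 x + 1"
    unfolding q_def by linarith+
  then have "x \<le> 2 powr real q"
    using assms by (simp add: log_le_iff)
  then show ?thesis
    using \<open>real q \<le> log 2 x + 1\<close> by (intro exI[of _ q]) (simp add: powr_realpow)
qed

lemma log2_one_plus_quotient_le:
  assumes "\<gamma> > 0" "b > 0"
  shows "log 2 (1 + 2 * \<gamma> / (b / 2 ^ j)) \<le> real j + 2 + log 2 (1 + \<gamma>) + log 2 (1 + 1 / b)"
proof -
  have "2 * \<gamma> / (b / 2 ^ j) = 2 ^ (j + 1) * \<gamma> * (1 / b)"
    by (simp add: field_simps)
  moreover have "log 2 (1 + 2 ^ (j + 1) * \<gamma> * (1 / b)) \<le> log 2 (1 + 2 ^ (j + 1) * \<gamma>) + log 2 (1 + 1 / b)"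
    using assms by (intro log2_one_plus_mult_le) auto
  ultimately have "log 2 (1 + 2 * \<gamma> / (b / 2 ^ j)) \<le> log 2 (1 + 2 ^ (j + 1) * \<gamma>) + log 2 (1 + 1 / b)"
    by (simp only:)
  also have "log 2 (1 + 2 ^ (j + 1) * \<gamma>) \<le> log 2 (1 + 2 ^ (j + 1)) + log 2 (1 + \<gamma>)"
    using assms by (intro log2_one_plus_mult_le) auto
  also have "log 2 (1 + 2 ^ (j + 1)) \<le> log 2 (2 ^ (j + 2))"
    using one_le_power[of "2::real" "j + 1"] by (intro log_mono) auto
  also have "\<dots> = real j + 2"
    by (subst log_nat_power) simp_all
  finally show ?thesis
    by simp
qed

lemma index_le_mult_sq:
  assumes n: "n \<ge> 1" and q: "real q \<le> a + B * real n" and a: "a \<ge> 0" and B: "B \<ge> 0"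
  shows "n * (3 * n + q) \<le> nat \<lceil>3 + a + B\<rceil> * (n * n)"
proof -
  have "real n * real q \<le> real n * (a + B * real n)"
    using q by (simp add: mult_left_mono)
  also have "\<dots> = a * real n + B * (real n * real n)"
    by (simp add: algebra_simps)
  also have "\<dots> \<le> a * (real n * real n) + B * (real n * real n)"
    using n a by (simp add: mult_left_mono)
  finally have nq: "real n * real q \<le> a * (real n * real n) + B * (real n * real n)" .
  have "real (n * (3 * n + q)) = 3 * (real n * real n) + real n * real q"
    by (simp add: algebra_simps)
  also have "\<dots> \<le> (3 + a + B) * (real n * real n)"
    using nq by (simp add: algebra_simps)
  also have "\<dots> \<le> real (nat \<lceil>3 + a + B\<rceil>) * (real n * real n)"
    by (intro mult_right_mono) (linarith, simp)
  finally show ?thesis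
    by (simp only: of_nat_mult[symmetric] of_nat_le_iff)
qed

lemma exists_powr_div_pow2_less:
  fixes A p c :: real
  assumes "c > 0"
  shows "\<exists>j::nat. 2 * (A + real j) powr p / 2 ^ j < c"
proof -
  have "((\<lambda>j::nat. 2 * (A + real j) powr p / 2 ^ j) \<longlongrightarrow> 0) sequentially"
    by real_asymp
  then have "eventually (\<lambda>j. 2 * (A + real j) powr p / 2 ^ j < c) sequentially"
    using assms by (rule order_tendstoD(2))
  then show ?thesis
    by (meson eventually_sequentially order_refl)
qed

context
  fixes K :: "'a::real_normed_vector set"
  assumes K_bounded: "bounded K" and K_nonempty: "K \<noteq> {}"
begin

lemma lip_width_lower_bound_at:
  assumes \<gamma>: "\<gamma> > 0" and b: "b > 0" and n: "n \<ge> 2" and P: "P \<ge> 0" and Q: "Q \<ge> 0"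
    and \<gamma>_log: "log 2 (1 + \<gamma>) \<le> P * real n" and b_log: "log 2 (1 + 1 / b) \<le> Q * real n"
    and c: "c > 0" and p: "p \<ge> 0"
    and entropy_lower: "\<forall>m\<ge>1. c * (real m + 2) powr (- p) * b \<le> entropy_number K (m * (n * n))"
    and j: "2 / 2 ^ j \<le> c * (9 + P + Q + real j) powr (- p)"
  shows "b / 2 ^ j \<le> lip_width \<gamma> K n"
proof -
  define \<eta> where "\<eta> = b / 2 ^ j / \<gamma>"
  have \<eta>: "\<eta> > 0"
    using \<gamma> b by (simp add: \<eta>_def)
  obtain q where q: "1 + 2 / \<eta> \<le> 2 ^ q" "real q \<le> log 2 (1 + 2 / \<eta>) + 1"
    using exists_pow2_bound[of "1 + 2 / \<eta>"] \<eta> by auto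
  have "2 / \<eta> = 2 * \<gamma> / (b / 2 ^ j)"
    by (simp add: \<eta>_def)
  then have "log 2 (1 + 2 / \<eta>) \<le> real j + 2 + P * real n + Q * real n"
    using log2_one_plus_quotient_le[OF \<gamma> b, of j] \<gamma>_log b_log by simp
  then have "real q \<le> (real j + 3) + (P + Q) * real n"
    using q(2) by (simp add: algebra_simps)
  moreover define m where "m = nat \<lceil>3 + (real j + 3) + (P + Q)\<rceil>"
  ultimately have m: "n * (3 * n + q) \<le> m * (n * n)"
    unfolding m_def using n P Q by (intro index_le_mult_sq) auto
  have "6 \<le> real m" "real m \<le> 7 + real j + P + Q"
    using P Q unfolding m_def by linarith+
  then have m_bounds: "1 \<le> m" "real m + 2 \<le> 9 + P + Q + real j"
    by simp_all
  have "c * (real m + 2) powr (- p) * b \<le> entropy_number K (m * (n * n))"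
    using entropy_lower m_bounds(1) by blast
  also have "\<dots> \<le> entropy_number K (n * (3 * n + q))"
    by (rule entropy_number_antimono[OF K_bounded m])
  also have "\<dots> \<le> lip_width \<gamma> K n + \<gamma> * \<eta>"
    using n by (intro entropy_number_le_lip_width[OF K_bounded K_nonempty \<gamma> _ \<eta> q(1)]) simp
  also have "\<gamma> * \<eta> = b / 2 ^ j"
    using \<gamma> by (simp add: \<eta>_def)
  finally have "c * (real m + 2) powr (- p) * b \<le> lip_width \<gamma> K n + b / 2 ^ j" .
  moreover have "2 / 2 ^ j \<le> c * (real m + 2) powr (- p)"
    using j m_bounds(2) c p by (smt (verit) mult_left_mono powr_mono2' of_nat_0_le_iff)
  then have "2 / 2 ^ j * b \<le> c * (real m + 2) powr (- p) * b"
    using b by (simp only: mult_right_mono less_imp_le)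
  moreover have "2 / 2 ^ j * b = 2 * (b / 2 ^ j)"
    by simp
  ultimately show ?thesis
    by linarith
qed

text \<open>The entropy numbers may lose at most a polynomial factor in \<open>m\<close> along \<open>m n^2\<close>: this absorbs
  the \<open>O(n)\<close> extra bits, due to \<open>log \<gamma>_n = O(n)\<close>, of the net pulled back through the Lipschitz map.\<close>

lemma lip_width_lower_bound:
  fixes \<gamma> b :: "nat \<Rightarrow> real"
  assumes \<gamma>_pos: "\<forall>n\<ge>1. \<gamma> n > 0" and \<gamma>_log: "\<forall>n\<ge>1. log 2 (1 + \<gamma> n) \<le> P * real n"
    and b_pos: "\<forall>n\<ge>2. b n > 0" and b_log: "\<forall>n\<ge>2. log 2 (1 + 1 / b n) \<le> Q * real n"
    and c: "c > 0" and p: "p \<ge> 0"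
    and entropy_lower: "\<forall>m\<ge>1. \<forall>n\<ge>2. c * (real m + 2) powr (- p) * b n \<le> entropy_number K (m * (n * n))"
  shows "\<exists>\<kappa>>0. \<forall>n\<ge>2. \<kappa> * b n \<le> lip_width (\<gamma> n) K n"
proof -
  have "0 < log 2 (1 + \<gamma> 1)" "0 < log 2 (1 + 1 / b 2)"
    using \<gamma>_pos b_pos by (simp_all add: add_pos_pos)
  moreover have "log 2 (1 + \<gamma> 1) \<le> P" "log 2 (1 + 1 / b 2) \<le> Q * 2"
    using \<gamma>_log b_log by auto
  ultimately have P: "P \<ge> 0" and Q: "Q \<ge> 0"
    by linarith+
  define A where "A = 9 + P + Q"
  obtain j where "2 * (A + real j) powr p / 2 ^ j < c"
    using exists_powr_div_pow2_less[OF c] by blast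
  moreover have "0 < (A + real j) powr p"
    using P Q by (simp add: A_def)
  ultimately have "2 / 2 ^ j \<le> c * (A + real j) powr (- p)"
    by (simp add: powr_minus field_simps)
  then have "b n / 2 ^ j \<le> lip_width (\<gamma> n) K n" if "n \<ge> 2" for n
    using that \<gamma>_pos \<gamma>_log b_pos b_log entropy_lower
    by (intro lip_width_lower_bound_at[OF _ _ _ P Q _ _ c p]) (auto simp: A_def)
  then show ?thesis
    by (intro exI[of _ "1 / 2 ^ j"]) auto
qed

lemma lip_width_upper_bound:
  fixes \<gamma> b :: "nat \<Rightarrow> real"
  assumes \<gamma>_large: "\<forall>Z. eventually (\<lambda>n. 2 ^ n * Z \<le> \<gamma> n) sequentially" and \<gamma>_nonneg: "\<forall>n. \<gamma> n \<ge> 0"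
    and b_pos: "\<forall>n\<ge>2. b n > 0" and entropy_upper: "\<forall>n\<ge>2. entropy_number K (n * n) \<le> C1 * b n"
  shows "\<exists>C. \<forall>n\<ge>2. lip_width (\<gamma> n) K n \<le> C * b n"
proof -
  obtain x0 where x0: "x0 \<in> K"
    using K_nonempty by blast
  obtain r where "\<forall>f\<in>K. dist x0 f \<le> r"
    using K_bounded bounded_any_center by blast
  then obtain D where D: "D > 0" "\<forall>f\<in>K. norm (f - x0) \<le> D"
    by (intro that[of "max r 1"]) (auto simp: dist_norm norm_minus_commute)
  obtain n0 where n0: "\<And>n. n \<ge> n0 \<Longrightarrow> 2 ^ n * (2 * (2 * D + 1)) \<le> \<gamma> n"
    using \<gamma>_large eventually_sequentially by meson
  define Mx where "Mx = Max ((\<lambda>n. D / b n) ` {2..n0})"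
  have "lip_width (\<gamma> n) K n \<le> max C1 Mx * b n" if n: "n \<ge> 2" for n
  proof (cases "n \<ge> n0")
    case True
    then have "lip_width (\<gamma> n) K n \<le> entropy_number K (n * n)"
      using n n0[OF True] by (intro lip_width_le_entropy_number_sq[OF K_bounded K_nonempty _ D]) (simp_all add: algebra_simps)
    also have "\<dots> \<le> max C1 Mx * b n"
      using entropy_upper n b_pos by (smt (verit) max.cobounded1 mult_right_mono)
    finally show ?thesis .
  next
    case False
    have "lip_width (\<gamma> n) K n \<le> D"
      using n \<gamma>_nonneg by (intro lip_width_le_radius[OF K_bounded K_nonempty _ _ D(2)]) auto
    also have "\<dots> = D / b n * b n"
      using b_pos n by force
    also have "\<dots> \<le> max C1 Mx * b n"
      using False n b_pos unfolding Mx_def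
      by (intro mult_right_mono) (auto intro!: max.coboundedI2 Max_ge)
    finally show ?thesis .
  qed
  then show ?thesis
    by blast
qed

end

lemma entropy_number_mult_sq_bounds:
  fixes a b :: "nat \<Rightarrow> real"
  assumes H: "asymp_equiv_ge2 (entropy_number K) a"
    and a_lower: "\<forall>m\<ge>1. \<forall>n\<ge>2. (real m + 2) powr (- p) * b n \<le> a (m * (n * n))"
    and a_upper: "\<forall>n\<ge>2. a (n * n) \<le> B * b n"
  obtains c C where "c > 0"
    and "\<forall>m\<ge>1. \<forall>n\<ge>2. c * (real m + 2) powr (- p) * b n \<le> entropy_number K (m * (n * n))"
    and "\<forall>n\<ge>2. entropy_number K (n * n) \<le> C * b n"
proof -
  obtain c C where c: "0 < c" "c \<le> C" and bounds: "\<forall>m\<ge>2. c * a m \<le> entropy_number K m \<and> entropy_number K m \<le> C * a m"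
    using H unfolding asymp_equiv_ge2_def by blast
  have mult_sq: "m * (n * n) \<ge> 2" if "m \<ge> 1" "n \<ge> 2" for m n :: nat
    using that mult_le_mono[OF that(1) mult_le_mono[OF that(2) that(2)]] by simp
  have "c * (real m + 2) powr (- p) * b n \<le> entropy_number K (m * (n * n))" if m: "m \<ge> 1" and n: "n \<ge> 2" for m n
  proof -
    have "c * ((real m + 2) powr (- p) * b n) \<le> c * a (m * (n * n))"
      using a_lower m n c(1) by (simp add: mult_left_mono)
    also have "\<dots> \<le> entropy_number K (m * (n * n))"
      using bounds mult_sq[OF m n] by blast
    finally show ?thesis
      by (simp only: mult.assoc)
  qed
  moreover have "entropy_number K (n * n) \<le> (C * B) * b n" if n: "n \<ge> 2" for n
  proof -
    have "entropy_number K (n * n) \<le> C * a (n * n)"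
      using bounds mult_sq[OF order_refl n] unfolding mult_1 by blast
    also have "\<dots> \<le> C * (B * b n)"
      using a_upper n c by (intro mult_left_mono) auto
    finally show ?thesis
      by (simp only: mult.assoc)
  qed
  ultimately show ?thesis
    using that c(1) by blast
qed

lemma lip_width_asymp_equiv_ge2:
  fixes K :: "'a::real_normed_vector set" and a b :: "nat \<Rightarrow> real"
  assumes K: "bounded K" and C': "C' > 0" and lam: "lam > 2"
    and H: "asymp_equiv_ge2 (entropy_number K) a"
    and b_pos: "\<forall>n\<ge>2. b n > 0" and b_log: "\<forall>n\<ge>2. log 2 (1 + 1 / b n) \<le> Q * real n"
    and p: "p \<ge> 0" and a_lower: "\<forall>m\<ge>1. \<forall>n\<ge>2. (real m + 2) powr (- p) * b n \<le> a (m * (n * n))"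
    and a_upper: "\<forall>n\<ge>2. a (n * n) \<le> B * b n"
  shows "asymp_equiv_ge2 (\<lambda>n. lip_width (C' * real n powr \<delta> * lam ^ n) K n) b"
proof -
  define \<gamma> where "\<gamma> n = C' * real n powr \<delta> * lam ^ n" for n
  obtain c C where c: "c > 0"
    and entropy_lower: "\<forall>m\<ge>1. \<forall>n\<ge>2. c * (real m + 2) powr (- p) * b n \<le> entropy_number K (m * (n * n))"
    and entropy_upper: "\<forall>n\<ge>2. entropy_number K (n * n) \<le> C * b n"
    using entropy_number_mult_sq_bounds[OF H a_lower a_upper] by blast
  have "0 < c * (real 1 + 2) powr (- p) * b 2"
    using b_pos c by simp
  then have "K \<noteq> {}"
    using entropy_lower nonempty_if_entropy_number_pos by (metis le_refl one_le_numeral order_less_le_trans)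
  note K = K this
  obtain \<kappa> where \<kappa>: "\<kappa> > 0" "\<forall>n\<ge>2. \<kappa> * b n \<le> lip_width (\<gamma> n) K n"
    using lip_width_lower_bound[OF K _ _ b_pos b_log c p entropy_lower, of \<gamma> "log 2 (1 + C') + 2 + \<bar>\<delta>\<bar> + log 2 lam"]
      log2_one_plus_gamma_le[of C' lam] C' lam by (auto simp: \<gamma>_def)
  obtain C2 where C2: "\<forall>n\<ge>2. lip_width (\<gamma> n) K n \<le> C2 * b n"
    using lip_width_upper_bound[OF K _ _ b_pos entropy_upper, of \<gamma>] eventually_pow2_le_gamma[OF C' lam] C' lam
    by (auto simp: \<gamma>_def)
  have "\<forall>n\<ge>2. \<kappa> * b n \<le> lip_width (\<gamma> n) K n \<and> lip_width (\<gamma> n) K n \<le> max \<kappa> C2 * b n"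
    using \<kappa> C2 b_pos by (smt (verit) max.cobounded2 mult_right_mono)
  then show ?thesis
    unfolding asymp_equiv_ge2_def \<gamma>_def using \<kappa>(1) by (intro exI[of _ \<kappa>] exI[of _ "max \<kappa> C2"]) auto
qed

section \<open>The two decay rates\<close>

lemma log2_mult_sq_bounds:
  assumes m: "m \<ge> 1" and n: "n \<ge> 2"
  shows "log 2 (real n) \<le> log 2 (real (m * (n * n)))"
    and "log 2 (real (m * (n * n))) \<le> (real m + 2) * log 2 (real n)"
proof -
  have eq: "log 2 (real (m * (n * n))) = log 2 (real m) + 2 * log 2 (real n)"
    using m n by (simp add: log_mult)
  have "1 \<le> log 2 (real n)" "0 \<le> log 2 (real m)" "log 2 (real m) \<le> real m"
    using m n log2_le_self[OF m] by simp_all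
  then show "log 2 (real n) \<le> log 2 (real (m * (n * n)))"
    and "log 2 (real (m * (n * n))) \<le> (real m + 2) * log 2 (real n)"
    unfolding eq by (simp_all add: algebra_simps) (smt (verit) mult_le_cancel_left1)
qed

lemma powr_sq: "real (n * n) powr a = real n powr (2 * a)"
  by (simp add: powr_mult powr_add[symmetric])

lemma powr_le_between_scaled:
  fixes E L W :: real
  assumes L: "1 \<le> L" and E: "1 \<le> E" and LW: "L \<le> W" "W \<le> E * L"
  shows "E powr (- \<bar>\<beta>\<bar>) * L powr \<beta> \<le> W powr \<beta>"
proof (cases "\<beta> \<ge> 0")
  case True
  have "E powr (- \<bar>\<beta>\<bar>) \<le> 1"
    using E by (simp add: powr_minus_divide ge_one_powr_ge_zero)
  then have "E powr (- \<bar>\<beta>\<bar>) * L powr \<beta> \<le> L powr \<beta>"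
    using L by (simp add: mult_left_le_one_le)
  also have "\<dots> \<le> W powr \<beta>"
    using True LW L by (intro powr_mono2) auto
  finally show ?thesis .
next
  case False
  have "(E * L) powr \<beta> \<le> W powr \<beta>"
    using False LW L by (intro powr_mono2') auto
  moreover have "(E * L) powr \<beta> = E powr (- \<bar>\<beta>\<bar>) * L powr \<beta>"
    using False E L by (simp add: powr_mult)
  ultimately show ?thesis
    by simp
qed

lemma poly_rate_mult_sq_lower:
  assumes a: "\<alpha> > 0" and m: "m \<ge> 1" and n: "n \<ge> 2"
  shows "(real m + 2) powr (- (\<bar>\<beta>\<bar> + \<alpha>)) * (log 2 (real n) powr \<beta> / real n powr (2 * \<alpha>))
     \<le> log 2 (real (m * (n * n))) powr \<beta> / real (m * (n * n)) powr \<alpha>"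
proof -
  define L where "L = log 2 (real n)"
  define W where "W = log 2 (real (m * (n * n)))"
  define E where "E = real m + 2"
  have L: "L \<ge> 1" and E: "E \<ge> 1"
    using n by (simp_all add: L_def E_def)
  have LW: "L \<le> W" "W \<le> E * L"
    using log2_mult_sq_bounds[OF m n] by (simp_all add: L_def W_def E_def)
  have numerator: "E powr (- \<bar>\<beta>\<bar>) * L powr \<beta> \<le> W powr \<beta>"
    using L E LW by (rule powr_le_between_scaled)
  have "real (m * (n * n)) powr \<alpha> = real m powr \<alpha> * real (n * n) powr \<alpha>"
    by (simp only: of_nat_mult[of m] powr_mult of_nat_0_le_iff)
  also have "\<dots> \<le> E powr \<alpha> * real n powr (2 * \<alpha>)"
    unfolding powr_sq E_def using a by (intro mult_right_mono powr_mono2) auto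
  finally have denominator: "real (m * (n * n)) powr \<alpha> \<le> E powr \<alpha> * real n powr (2 * \<alpha>)" .
  have "E powr (- (\<bar>\<beta>\<bar> + \<alpha>)) * (L powr \<beta> / real n powr (2 * \<alpha>))
      = (E powr (- \<bar>\<beta>\<bar>) * L powr \<beta>) / (E powr \<alpha> * real n powr (2 * \<alpha>))"
  proof -
    have "E powr (- (\<bar>\<beta>\<bar> + \<alpha>)) = E powr (- \<bar>\<beta>\<bar>) / E powr \<alpha>"
      using powr_diff[of E "- \<bar>\<beta>\<bar>" \<alpha>] by simp
    then show ?thesis
      by simp
  qed
  also have "\<dots> \<le> W powr \<beta> / (E powr \<alpha> * real n powr (2 * \<alpha>))"
    using numerator E n by (intro divide_right_mono) auto
  also have "\<dots> \<le> W powr \<beta> / real (m * (n * n)) powr \<alpha>"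
    using denominator m n E by (intro divide_left_mono) auto
  finally show ?thesis
    unfolding L_def W_def E_def .
qed

lemma poly_rate_sq:
  assumes "n \<ge> 2"
  shows "log 2 (real (n * n)) powr \<beta> / real (n * n) powr \<alpha>
    = 2 powr \<beta> * (log 2 (real n) powr \<beta> / real n powr (2 * \<alpha>))"
proof -
  have log: "log 2 (real (n * n)) = 2 * log 2 (real n)"
    using assms by (simp add: log_mult)
  have "0 \<le> log 2 (real n)"
    using assms by simp
  then show ?thesis
    unfolding log powr_sq by (simp add: powr_mult)
qed

lemma log2_one_plus_inverse_poly_rate_le:
  assumes a: "\<alpha> > 0" and n: "n \<ge> 2"
  shows "log 2 (1 + 1 / (log 2 (real n) powr \<beta> / real n powr (2 * \<alpha>))) \<le> (1 + 2 * \<alpha> + \<bar>\<beta>\<bar>) * real n"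
proof -
  define L where "L = log 2 (real n)"
  have L: "1 \<le> L" "L \<le> real n"
    using n log2_le_self[of n] by (simp_all add: L_def)
  have "L powr (- \<beta>) \<le> L powr \<bar>\<beta>\<bar>"
    using L by (intro powr_mono) auto
  also have "\<dots> \<le> real n powr \<bar>\<beta>\<bar>"
    using L by (intro powr_mono2) auto
  finally have "real n powr (2 * \<alpha>) * L powr (- \<beta>) \<le> real n powr (2 * \<alpha> + \<bar>\<beta>\<bar>)"
    using n by (simp add: powr_add mult_left_mono)
  then have "log 2 (1 + real n powr (2 * \<alpha>) * L powr (- \<beta>)) \<le> 1 + (2 * \<alpha> + \<bar>\<beta>\<bar>) * real n"
    using a n by (intro log2_one_plus_le_linear) auto
  also have "\<dots> \<le> (1 + 2 * \<alpha> + \<bar>\<beta>\<bar>) * real n"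
    using n by (simp add: algebra_simps)
  finally show ?thesis
    using L n by (simp add: L_def[symmetric] powr_minus field_simps)
qed

lemma log_rate_mult_sq_lower:
  assumes a: "\<alpha> > 0" and m: "m \<ge> 1" and n: "n \<ge> 2"
  shows "(real m + 2) powr (- \<alpha>) * (1 / log 2 (real n) powr \<alpha>) \<le> 1 / log 2 (real (m * (n * n))) powr \<alpha>"
proof -
  define L where "L = log 2 (real n)"
  define W where "W = log 2 (real (m * (n * n)))"
  define E where "E = real m + 2"
  have L: "L \<ge> 1" and E: "E \<ge> 1"
    using n by (simp_all add: L_def E_def)
  have LW: "L \<le> W" "W \<le> E * L"
    using log2_mult_sq_bounds[OF m n] by (simp_all add: L_def W_def E_def)
  have "W powr \<alpha> \<le> (E * L) powr \<alpha>"
    using LW L a by (intro powr_mono2) auto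
  also have "\<dots> = E powr \<alpha> * L powr \<alpha>"
    using E L by (simp add: powr_mult)
  finally have "1 / (E powr \<alpha> * L powr \<alpha>) \<le> 1 / W powr \<alpha>"
    using E L LW by (intro divide_left_mono) auto
  then show ?thesis
    by (simp add: L_def W_def E_def powr_minus field_simps)
qed

lemma log_rate_sq_le:
  assumes a: "\<alpha> > 0" and n: "n \<ge> 2"
  shows "1 / log 2 (real (n * n)) powr \<alpha> \<le> 1 / log 2 (real n) powr \<alpha>"
proof -
  have "log 2 (real (n * n)) = 2 * log 2 (real n)"
    using n by (simp add: log_mult)
  moreover have "log 2 (real n) powr \<alpha> \<le> (2 * log 2 (real n)) powr \<alpha>"
    using n a by (intro powr_mono2) auto
  moreover have "1 \<le> log 2 (real n)"
    using n by simp
  then have "log 2 (real n) powr \<alpha> > 0"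
    by simp
  ultimately show ?thesis
    by (simp add: divide_left_mono)
qed

lemma log2_one_plus_inverse_log_rate_le:
  assumes a: "\<alpha> > 0" and n: "n \<ge> 2"
  shows "log 2 (1 + 1 / (1 / log 2 (real n) powr \<alpha>)) \<le> (1 + \<alpha>) * real n"
proof -
  have "1 \<le> log 2 (real n)" "log 2 (real n) \<le> real n"
    using n log2_le_self[of n] by simp_all
  then have "log 2 (real n) powr \<alpha> \<le> real n powr \<alpha>"
    using a by (intro powr_mono2) auto
  then have "log 2 (1 + log 2 (real n) powr \<alpha>) \<le> 1 + \<alpha> * real n"
    using a n by (intro log2_one_plus_le_linear) auto
  also have "\<dots> \<le> (1 + \<alpha>) * real n"
    using n by (simp add: algebra_simps)
  finally show ?thesis
    by simp
qed

lemma poly_rate_pos: "n \<ge> 2 \<Longrightarrow> 0 < log 2 (real n) powr \<beta> / real n powr \<alpha>"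
proof -
  assume n: "n \<ge> 2"
  then have "1 \<le> log 2 (real n)"
    by simp
  then have "log 2 (real n) \<noteq> 0"
    by linarith
  then show ?thesis
    using n by simp
qed

lemma log_rate_pos: "n \<ge> 2 \<Longrightarrow> 0 < 1 / log 2 (real n) powr \<alpha>"
proof -
  assume n: "n \<ge> 2"
  then have "1 \<le> log 2 (real n)"
    by simp
  then have "log 2 (real n) \<noteq> 0"
    by linarith
  then show ?thesis
    by simp
qed

lemma lip_width_asymp_poly_rate:
  fixes K :: "'a::real_normed_vector set"
  assumes K: "bounded K" and C': "C' > 0" and lam: "lam > 2" and \<alpha>: "\<alpha> > 0"
    and H: "asymp_equiv_ge2 (entropy_number K) (\<lambda>n. log 2 (real n) powr \<beta> / real n powr \<alpha>)"
  shows "asymp_equiv_ge2 (\<lambda>n. lip_width (C' * real n powr \<delta> * lam ^ n) K n)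
           (\<lambda>n. log 2 (real n) powr \<beta> / real n powr (2 * \<alpha>))"
proof (rule lip_width_asymp_equiv_ge2[OF K C' lam H])
  show "\<forall>n\<ge>2. log 2 (1 + 1 / (log 2 (real n) powr \<beta> / real n powr (2 * \<alpha>))) \<le> (1 + 2 * \<alpha> + \<bar>\<beta>\<bar>) * real n"
    using log2_one_plus_inverse_poly_rate_le[OF \<alpha>] by blast
  show "\<forall>m\<ge>1. \<forall>n\<ge>2. (real m + 2) powr (- (\<bar>\<beta>\<bar> + \<alpha>)) * (log 2 (real n) powr \<beta> / real n powr (2 * \<alpha>))
      \<le> log 2 (real (m * (n * n))) powr \<beta> / real (m * (n * n)) powr \<alpha>"
    using poly_rate_mult_sq_lower[OF \<alpha>] by blast
  show "\<forall>n\<ge>2. log 2 (real (n * n)) powr \<beta> / real (n * n) powr \<alpha>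
      \<le> 2 powr \<beta> * (log 2 (real n) powr \<beta> / real n powr (2 * \<alpha>))"
    using poly_rate_sq by simp
qed (use poly_rate_pos \<alpha> in auto)

lemma lip_width_asymp_log_rate:
  fixes K :: "'a::real_normed_vector set"
  assumes K: "bounded K" and C': "C' > 0" and lam: "lam > 2" and \<alpha>: "\<alpha> > 0"
    and H: "asymp_equiv_ge2 (entropy_number K) (\<lambda>n. 1 / log 2 (real n) powr \<alpha>)"
  shows "asymp_equiv_ge2 (\<lambda>n. lip_width (C' * real n powr \<delta> * lam ^ n) K n) (\<lambda>n. 1 / log 2 (real n) powr \<alpha>)"
proof (rule lip_width_asymp_equiv_ge2[OF K C' lam H])
  show "\<forall>n\<ge>2. log 2 (1 + 1 / (1 / log 2 (real n) powr \<alpha>)) \<le> (1 + \<alpha>) * real n"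
    using log2_one_plus_inverse_log_rate_le[OF \<alpha>] by blast
  show "\<forall>m\<ge>1. \<forall>n\<ge>2. (real m + 2) powr (- \<alpha>) * (1 / log 2 (real n) powr \<alpha>) \<le> 1 / log 2 (real (m * (n * n))) powr \<alpha>"
    using log_rate_mult_sq_lower[OF \<alpha>] by blast
  show "\<forall>n\<ge>2. 1 / log 2 (real (n * n)) powr \<alpha> \<le> 1 * (1 / log 2 (real n) powr \<alpha>)"
    using log_rate_sq_le[OF \<alpha>] by simp
qed (use log_rate_pos \<alpha> in auto)

theorem corollary7p4:
  fixes K :: "'a::banach set" and C' \<delta> lam :: real
  assumes "compact K" and "C' > 0" and "lam > 2"
  defines "\<gamma> \<equiv> (\<lambda>n::nat. C' * real n powr \<delta> * lam ^ n)"
  shows "(\<forall>\<alpha>>0. \<forall>\<beta>::real.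
            asymp_equiv_ge2 (entropy_number K) (\<lambda>n. (log 2 (real n)) powr \<beta> / real n powr \<alpha>) \<longrightarrow>
            asymp_equiv_ge2 (\<lambda>n. lip_width (\<gamma> n) K n) (\<lambda>n. (log 2 (real n)) powr \<beta> / real n powr (2 * \<alpha>)))
       \<and> (\<forall>\<alpha>>0.
            asymp_equiv_ge2 (entropy_number K) (\<lambda>n. 1 / (log 2 (real n)) powr \<alpha>) \<longrightarrow>
            asymp_equiv_ge2 (\<lambda>n. lip_width (\<gamma> n) K n) (\<lambda>n. 1 / (log 2 (real n)) powr \<alpha>))"
  unfolding \<gamma>_def
  using lip_width_asymp_poly_rate[OF compact_imp_bounded[OF assms(1)] assms(2,3)]
    lip_width_asymp_log_rate[OF compact_imp_bounded[OF assms(1)] assms(2,3)]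
  by blast

end
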